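(* Let $\mu\in\mathcal P_\varnothing(nl)$ have Frobenius form $(a_1,\dots,a_k\mid b_1,\dots,b_k)$ and let $j\in\{0,\dots,l-1\}$. Then \[t^{e_j}\,\mathrm{Res}_{\mathsf{Eig}(\mu)^j}(t^h)=\sum_{1\le i\le k,\ \mathsf{type}_\mu(A,i)=j}\Xi_\mu(A,i)\;+\sum_{1\le i\le k,\ \mathsf{type}_\mu(L,i)=j}\Xi_\mu(L,i).\]
   Context: Let $\mathbf h=(h,H_1,\dots,H_{l-1})\in\mathbb{Q}^l$ be generic (in particular $\mathrm{Spec}$ of the centre of the rational Cherednik algebra of $(\mathbb{Z}/l\mathbb{Z})\wr S_n$ at this parameter is smooth). Let $H_0=-\sum_{i\ge1}H_i$ and $\theta=(-h+H_0,H_1,\dots,H_{l-1})$, with indices mod $l$. Define $e_0=0$ and $e_i=H_1+\dots+H_i$ for $1\le i\le l-1$. Define $e'_0=-h$, $e'_i=e_i$ for $i\ge1$, $e''_{l-1}=0$, and $e''_i=h+\sum_{j=1}^{l-i-1}H_j$ for $0\le i\le l-2$. For a partition $\lambda$, $\mathrm{Res}_\lambda(t)=\sum_{\square\in\lambda}t^{c(\square)}$ with $c(i,j)=j-i$; $t^{e}\mathrm{Res}_\lambda(t^h)$ means $\sum_{\square}t^{e+hc(\square)}$. $\mathcal P_\varnothing(nl)$ is the set of partitions of $nl$ with empty $l$-core. The Frobenius form has $a_i=\mu_i-i$ and $b_i=\mu_i^t-i$. Set $\mathsf{type}_\mu(L,i)=b_i\bmod l$ and $\mathsf{type}_\mu(A,i)=-(a_i+1)\bmod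 l$. Set $\Xi_\mu(L,i)=t^{e'_{b_i}}\sum_{j=1}^{\lceil b_i/l\rceil}t^{-(j-1)h}$ and $\Xi_\mu(A,i)=t^{e''_{a_i}}\sum_{j=1}^{\lfloor(a_i+1)/l\rfloor}t^{(j-1)h}$ (subscripts mod $l$). Define $\mathrm{Eig}(\mu)=\sum_i\mathrm{Eig}(\mu,i)$, where $\mathrm{Eig}(\mu,i)=\sum_{1\le j\le m_i,\ j\equiv r_i-1\ (l)}t^{\alpha_j^{(i)}}$, $r_i=b_i+1$, $m_i=a_i+b_i+1$, $\alpha^{(i)}_{m_i}=0$, and for $j<m_i$: $\alpha^{(i)}_j=\sum_{s=1}^j\theta_{r_i-s}$ if $j<r_i$, $\alpha^{(i)}_j=-\sum_{s=0}^{m_i-j-1}\theta_{-m_i+r_i+s}$ if $j\ge r_i$. $\underline{\mathsf{Eig}}(\mu)=(\mathsf{Eig}(\mu)^0,\dots,\mathsf{Eig}(\mu)^{l-1})$ is the unique $l$-multipartition of $n$ with $\sum_{j}t^{e_j}\mathrm{Res}_{\mathsf{Eig}(\mu)^j}(t^h)=\mathrm{Eig}(\mu)$. The paper establishes its existence and uniqueness for generic $\mathbf h$. *)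

theory Defs
  imports Complex_Main "HOL-Library.Multiset"
begin

definition is_partition :: "nat list \<Rightarrow> bool" where
  "is_partition p \<longleftrightarrow> sorted_wrt (\<ge>) p \<and> 0 \<notin> set p"

definition psize :: "nat list \<Rightarrow> nat" where
  "psize p = sum_list p"

definition part :: "nat list \<Rightarrow> nat \<Rightarrow> nat" where
  "part p i = (if 1 \<le> i \<and> i \<le> length p then p ! (i - 1) else 0)"

text \<open>Young diagram: boxes (i,j), row i, column j, both 1-indexed.\<close>
definition diagram :: "nat list \<Rightarrow> (nat \<times> nat) set" where
  "diagram p = {(i, j). 1 \<le> i \<and> i \<le> length p \<and> 1 \<le> j \<and> j \<le> part p i}"

text \<open>Multiset of contents c(i,j) = j - i of the boxes; this encodes Res_\<lambda>(t).\<close>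
definition contents :: "nat list \<Rightarrow> int multiset" where
  "contents p = image_mset (\<lambda>(i, j). int j - int i) (mset_set (diagram p))"

text \<open>t^e Res_\<lambda>(t^h), as the multiset of exponents of t.\<close>
definition shifted_res :: "rat \<Rightarrow> rat \<Rightarrow> nat list \<Rightarrow> rat multiset" where
  "shifted_res e h p = image_mset (\<lambda>c. e + h * of_int c) (contents p)"

definition box_adj :: "nat \<times> nat \<Rightarrow> nat \<times> nat \<Rightarrow> bool" where
  "box_adj x y \<longleftrightarrow> \<bar>int (fst x) - int (fst y)\<bar> + \<bar>int (snd x) - int (snd y)\<bar> = 1"

definition connected_boxes :: "(nat \<times> nat) set \<Rightarrow> bool" where
  "connected_boxes D \<longleftrightarrow>
     (\<forall>x\<in>D. \<forall>y\<in>D. (\<lambda>u v. u \<in> D \<and> v \<in> D \<and> box_adj u v)\<^sup>*\<^sup>* x y)"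

definition rim_hook :: "nat \<Rightarrow> nat list \<Rightarrow> nat list \<Rightarrow> bool" where
  "rim_hook l p q \<longleftrightarrow> is_partition p \<and> is_partition q \<and> diagram q \<subseteq> diagram p \<and>
     card (diagram p - diagram q) = l \<and>
     connected_boxes (diagram p - diagram q) \<and>
     \<not> (\<exists>i j. {(i, j), (i, Suc j), (Suc i, j), (Suc i, Suc j)} \<subseteq> diagram p - diagram q)"

text \<open>The l-core of \<lambda> is empty iff successive removal of l-rim hooks can reach the
  empty partition (the l-core does not depend on the order of removals).\<close>
inductive empty_core :: "nat \<Rightarrow> nat list \<Rightarrow> bool" for l where
  empty: "empty_core l []"
| step: "rim_hook l p q \<Longrightarrow> empty_core l q \<Longrightarrow> empty_core l p"

definition P_empty :: "nat \<Rightarrow> nat \<Rightarrow> nat list set" where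
  "P_empty l m = {\<mu>. is_partition \<mu> \<and> psize \<mu> = m \<and> empty_core l \<mu>}"

definition conj_part :: "nat list \<Rightarrow> nat \<Rightarrow> nat" where
  "conj_part \<mu> i = card {r \<in> {1..length \<mu>}. i \<le> part \<mu> r}"

definition durfee :: "nat list \<Rightarrow> nat" where
  "durfee \<mu> = card {i \<in> {1..length \<mu>}. i \<le> part \<mu> i}"

definition frob_a :: "nat list \<Rightarrow> nat \<Rightarrow> nat" where
  "frob_a \<mu> i = part \<mu> i - i"

definition frob_b :: "nat list \<Rightarrow> nat \<Rightarrow> nat" where
  "frob_b \<mu> i = conj_part \<mu> i - i"

text \<open>h :: rat, H i for 1 \<le> i \<le> l-1 (values of H outside this range are irrelevant).\<close>

definition H0 :: "nat \<Rightarrow> (nat \<Rightarrow> rat) \<Rightarrow> rat" where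
  "H0 l H = - (\<Sum>i=1..l-1. H i)"

definition theta :: "nat \<Rightarrow> rat \<Rightarrow> (nat \<Rightarrow> rat) \<Rightarrow> int \<Rightarrow> rat" where
  "theta l h H k = (let r = nat (k mod int l) in if r = 0 then - h + H0 l H else H r)"

definition ee :: "(nat \<Rightarrow> rat) \<Rightarrow> nat \<Rightarrow> rat" where
  "ee H i = (\<Sum>s=1..i. H s)"

definition ee' :: "rat \<Rightarrow> (nat \<Rightarrow> rat) \<Rightarrow> nat \<Rightarrow> rat" where
  "ee' h H i = (if i = 0 then - h else ee H i)"

definition ee'' :: "nat \<Rightarrow> rat \<Rightarrow> (nat \<Rightarrow> rat) \<Rightarrow> nat \<Rightarrow> rat" where
  "ee'' l h H i = (if i = l - 1 then 0 else h + (\<Sum>j=1..l-i-1. H j))"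

definition typeL :: "nat \<Rightarrow> nat list \<Rightarrow> nat \<Rightarrow> nat" where
  "typeL l \<mu> i = frob_b \<mu> i mod l"

definition typeA :: "nat \<Rightarrow> nat list \<Rightarrow> nat \<Rightarrow> nat" where
  "typeA l \<mu> i = nat ((- (int (frob_a \<mu> i) + 1)) mod int l)"

definition XiL :: "nat \<Rightarrow> rat \<Rightarrow> (nat \<Rightarrow> rat) \<Rightarrow> nat list \<Rightarrow> nat \<Rightarrow> rat multiset" where
  "XiL l h H \<mu> i =
     mset (map (\<lambda>j. ee' h H (frob_b \<mu> i mod l) - (of_nat j - 1) * h)
               [1..<nat \<lceil>(of_nat (frob_b \<mu> i) :: rat) / of_nat l\<rceil> + 1])"

definition XiA :: "nat \<Rightarrow> rat \<Rightarrow> (nat \<Rightarrow> rat) \<Rightarrow> nat list \<Rightarrow> nat \<Rightarrow> rat multiset" where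
  "XiA l h H \<mu> i =
     mset (map (\<lambda>j. ee'' l h H (frob_a \<mu> i mod l) + (of_nat j - 1) * h)
               [1..<nat \<lfloor>(of_nat (frob_a \<mu> i + 1) :: rat) / of_nat l\<rfloor> + 1])"

definition alpha :: "nat \<Rightarrow> rat \<Rightarrow> (nat \<Rightarrow> rat) \<Rightarrow> int \<Rightarrow> int \<Rightarrow> int \<Rightarrow> rat" where
  "alpha l h H r m j =
     (if j = m then 0
      else if j < r then (\<Sum>s\<in>{1..j}. theta l h H (r - s))
      else - (\<Sum>s\<in>{0..m - j - 1}. theta l h H (- m + r + s)))"

definition Eig_i :: "nat \<Rightarrow> rat \<Rightarrow> (nat \<Rightarrow> rat) \<Rightarrow> nat list \<Rightarrow> nat \<Rightarrow> rat multiset" where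
  "Eig_i l h H \<mu> i =
     (let r = int (frob_b \<mu> i) + 1; m = int (frob_a \<mu> i) + int (frob_b \<mu> i) + 1 in
      mset (map (alpha l h H r m) (filter (\<lambda>j. j mod int l = (r - 1) mod int l) [1..m])))"

definition Eig :: "nat \<Rightarrow> rat \<Rightarrow> (nat \<Rightarrow> rat) \<Rightarrow> nat list \<Rightarrow> rat multiset" where
  "Eig l h H \<mu> = (\<Sum>i\<in>{1..durfee \<mu>}. Eig_i l h H \<mu> i)"

definition is_multipartition :: "nat \<Rightarrow> nat \<Rightarrow> (nat \<Rightarrow> nat list) \<Rightarrow> bool" where
  "is_multipartition l n P \<longleftrightarrow> (\<forall>j<l. is_partition (P j)) \<and> (\<forall>j\<ge>l. P j = []) \<and>
     (\<Sum>j<l. psize (P j)) = n"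

definition EigMP :: "nat \<Rightarrow> nat \<Rightarrow> rat \<Rightarrow> (nat \<Rightarrow> rat) \<Rightarrow> nat list \<Rightarrow> nat \<Rightarrow> nat list" where
  "EigMP l n h H \<mu> = (THE P. is_multipartition l n P \<and>
      (\<Sum>j<l. shifted_res (ee H j) h (P j)) = Eig l h H \<mu>)"

text \<open>A (proper) affine hyperplane in the parameter space Q^l of (h, H_1..H_{l-1}),
  given by c0 + ch*h + \<Sum> cH i * H i = 0 with nonzero linear part.\<close>
definition proper_form :: "nat \<Rightarrow> rat \<times> rat \<times> (nat \<Rightarrow> rat) \<Rightarrow> bool" where
  "proper_form l f = (case f of (c0, ch, cH) \<Rightarrow> \<not> (ch = 0 \<and> (\<forall>i\<in>{1..l-1}. cH i = 0)))"

definition eval_form :: "nat \<Rightarrow> rat \<times> rat \<times> (nat \<Rightarrow> rat) \<Rightarrow> rat \<Rightarrow> (nat \<Rightarrow> rat) \<Rightarrow> rat" where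
  "eval_form l f h H = (case f of (c0, ch, cH) \<Rightarrow> c0 + ch * h + (\<Sum>i=1..l-1. cH i * H i))"

end

(* A partition is determined by its multiset of contents, which for Frobenius form
   (a_1..a_k | b_1..b_k) is the sum of the intervals [-b_i, a_i].  Eig(mu, i) splits as
   Xi(A, i) + Xi(L, i), and each Xi of type j has exponents e_j + c h with c running through
   an integer interval.  Removing an l-rim hook removes l consecutive contents, so an empty
   l-core makes all residues mod l equally frequent among the contents; hence there are as
   many arms as legs of each type j, and the intervals of type j reassemble into the hooks
   of a partition P_j.  The multipartition (P_j) then has the right total, and for generic
   parameters the exponents e_j + c h with |c| <= n are pairwise distinct, so it is the
   unique such multipartition, i.e. Eig(mu) itself. *)

theory Submission
  imports Defs
begin

section \<open>Contents of partitions\<close>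

lemma diagram_part: "diagram p = {(i, j). 1 \<le> i \<and> 1 \<le> j \<and> j \<le> part p i}"
  unfolding diagram_def part_def by (auto split: if_splits)

lemma diagram_Sigma: "diagram p = (SIGMA i:{1..length p}. {1..part p i})"
  unfolding diagram_def by auto

lemma finite_diagram [simp]: "finite (diagram p)"
  unfolding diagram_Sigma by auto

lemma diagram_Nil [simp]: "diagram [] = {}"
  by (simp add: diagram_def)

lemma sum_part_eq_sum_list: "(\<Sum>i=1..length p. part p i) = sum_list p"
proof -
  have "(\<Sum>i=1..length p. part p i) = (\<Sum>i<length p. p ! i)"
    by (rule sum.reindex_bij_witness[where i="\<lambda>i. i+1" and j="\<lambda>i. i - 1"])
       (auto simp: part_def)
  then show ?thesis by (simp add: sum_list_sum_nth lessThan_atLeast0)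
qed

lemma card_diagram: "card (diagram p) = psize p"
  unfolding diagram_Sigma psize_def using sum_part_eq_sum_list[of p] by (simp add: card_SigmaI)

lemma size_contents: "size (contents p) = psize p"
  unfolding contents_def by (simp add: card_diagram)

lemma part_antimono:
  assumes "is_partition p" "1 \<le> i" "i \<le> i'"
  shows "part p i' \<le> part p i"
proof (cases "i' \<le> length p")
  case True
  have s: "sorted_wrt (\<ge>) p" using assms(1) by (simp add: is_partition_def)
  have "p ! (i' - 1) \<le> p ! (i - 1)"
  proof (cases "i = i'")
    case False
    then show ?thesis using s True assms(2,3) by (auto simp: sorted_wrt_iff_nth_less)
  qed simp
  then show ?thesis using True assms by (auto simp: part_def)
next
  case False then show ?thesis by (simp add: part_def)
qed

lemma part_pos:
  assumes "is_partition p" "1 \<le> i" "i \<le> length p"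
  shows "0 < part p i"
proof -
  have "p ! (i - 1) \<in> set p" using assms(2,3) by simp
  then show ?thesis using assms unfolding is_partition_def part_def by (metis gr0I)
qed

lemma part_gt0_iff: "is_partition p \<Longrightarrow> 1 \<le> i \<Longrightarrow> 0 < part p i \<longleftrightarrow> i \<le> length p"
  using part_pos by (auto simp: part_def split: if_splits)

lemma diagram_downward_closed:
  assumes "is_partition p" "(i, j) \<in> diagram p" "1 \<le> i'" "i' \<le> i" "1 \<le> j'" "j' \<le> j"
  shows "(i', j') \<in> diagram p"
  using assms part_antimono[OF assms(1) assms(3) assms(4)] by (auto simp: diagram_part)

lemma count_image_mset_mset_set:
  assumes "finite A"
  shows "count (image_mset f (mset_set A)) x = card {a\<in>A. f a = x}"
proof -
  have "count (image_mset f (mset_set A)) x = sum (count (mset_set A)) (f -` {x} \<inter> A)"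
    using assms by (simp add: count_image_mset)
  also have "\<dots> = card (f -` {x} \<inter> A)"
    using assms by simp
  also have "f -` {x} \<inter> A = {a\<in>A. f a = x}" by auto
  finally show ?thesis .
qed

lemma image_mset_sum:
  "finite I \<Longrightarrow> image_mset f (\<Sum>i\<in>I. M i) = (\<Sum>i\<in>I. image_mset f (M i))"
  by (induction I rule: finite_induct) auto

lemma filter_mset_sum:
  "finite I \<Longrightarrow> filter_mset P (\<Sum>i\<in>I. M i) = (\<Sum>i\<in>I. filter_mset P (M i))"
  by (induction I rule: finite_induct) auto

definition content :: "nat \<times> nat \<Rightarrow> int" where
  "content b = int (snd b) - int (fst b)"

lemma contents_content: "contents p = image_mset content (mset_set (diagram p))"
  unfolding contents_def content_def by (rule image_mset_cong) (simp add: case_prod_beta)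

lemma count_contents: "count (contents p) c = card {b \<in> diagram p. content b = c}"
  by (simp add: contents_content count_image_mset_mset_set)

lemma mem_downward_closed_iff:
  fixes S :: "nat set"
  assumes fin: "finite S" and pos: "\<And>r. r \<in> S \<Longrightarrow> 1 \<le> r"
    and down: "\<And>r r'. r \<in> S \<Longrightarrow> 1 \<le> r' \<Longrightarrow> r' \<le> r \<Longrightarrow> r' \<in> S"
  shows "r \<in> S \<longleftrightarrow> 1 \<le> r \<and> r \<le> card S"
proof
  assume r: "r \<in> S"
  have "{1..r} \<subseteq> S" using down r by auto
  then have "card {1..r} \<le> card S" using fin by (rule card_mono[rotated])
  then show "1 \<le> r \<and> r \<le> card S" using pos r by simp
next
  assume r: "1 \<le> r \<and> r \<le> card S"
  show "r \<in> S"
  proof (rule ccontr)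
    assume "r \<notin> S"
    have "S \<subseteq> {1..r - 1}"
    proof
      fix s assume s: "s \<in> S"
      have "\<not> r \<le> s" using down[OF s] r \<open>r \<notin> S\<close> by blast
      then show "s \<in> {1..r - 1}" using pos[OF s] by simp
    qed
    then have "card S \<le> r - 1" using card_mono[of "{1..r-1}" S] by simp
    then show False using r by arith
  qed
qed

definition row_end_content :: "nat list \<Rightarrow> nat \<Rightarrow> int" where
  "row_end_content p i = int (part p i) - int i"

lemma row_end_content_strict_antimono:
  "is_partition p \<Longrightarrow> 1 \<le> i \<Longrightarrow> i < i' \<Longrightarrow> row_end_content p i' < row_end_content p i"
  using part_antimono[of p i i'] by (simp add: row_end_content_def)

lemma count_contents_eq_card_rows:
  "count (contents p) c = card {i. 1 \<le> i \<and> - c < int i \<and> c \<le> row_end_content p i}"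
proof -
  have "bij_betw (\<lambda>i. (i, nat (int i + c)))
      {i. 1 \<le> i \<and> - c < int i \<and> c \<le> row_end_content p i} {b \<in> diagram p. content b = c}"
  proof (rule bij_betwI')
    fix x assume "x \<in> {i. 1 \<le> i \<and> - c < int i \<and> c \<le> row_end_content p i}"
    then show "(x, nat (int x + c)) \<in> {b \<in> diagram p. content b = c}"
      by (auto simp: row_end_content_def diagram_part content_def)
  next
    fix y assume "y \<in> {b \<in> diagram p. content b = c}"
    then show "\<exists>x\<in>{i. 1 \<le> i \<and> - c < int i \<and> c \<le> row_end_content p i}. y = (x, nat (int x + c))"
      by (auto simp: row_end_content_def diagram_part content_def)
  qed auto
  then show ?thesis by (simp add: count_contents bij_betw_same_card)
qed

lemma finite_rows_end_content_ge:
  assumes p: "is_partition p"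
  shows "finite {i. 1 \<le> i \<and> c \<le> row_end_content p i}"
proof (rule finite_subset)
  show "{i. 1 \<le> i \<and> c \<le> row_end_content p i} \<subseteq> {1..nat (int (part p 1) - c)}"
  proof
    fix i assume "i \<in> {i. 1 \<le> i \<and> c \<le> row_end_content p i}"
    then have "1 \<le> i" "c \<le> row_end_content p i" by auto
    moreover have "part p i \<le> part p 1" using part_antimono[OF p, of 1 i] \<open>1 \<le> i\<close> by simp
    ultimately have "int i \<le> int (part p 1) - c"
      unfolding row_end_content_def by linarith
    then show "i \<in> {1..nat (int (part p 1) - c)}" using \<open>1 \<le> i\<close> by simp
  qed
qed simp

text \<open>The rows \<open>i'\<close> with \<open>c \<le> row_end_content p i'\<close> form an initial segment; each of them
  contains exactly one box of content \<open>c\<close>, except the first \<open>-c\<close> rows when \<open>c < 0\<close>.\<close>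
lemma le_row_end_content_iff:
  assumes p: "is_partition p" and i: "1 \<le> i"
  shows "c \<le> row_end_content p i \<longleftrightarrow> int i \<le> int (count (contents p) c) + max 0 (- c)"
proof -
  define S where "S = {i'. 1 \<le> i' \<and> c \<le> row_end_content p i'}"
  define T where "T = {i'. 1 \<le> i' \<and> - c < int i' \<and> c \<le> row_end_content p i'}"
  have finS: "finite S" unfolding S_def by (rule finite_rows_end_content_ge[OF p])
  have S_iff: "r \<in> S \<longleftrightarrow> 1 \<le> r \<and> r \<le> card S" for r
  proof (rule mem_downward_closed_iff[OF finS])
    show "r' \<in> S" if "r \<in> S" "1 \<le> r'" "r' \<le> r" for r r'
      using that row_end_content_strict_antimono[OF p, of r' r] by (cases "r' = r") (auto simp: S_def)
  qed (simp add: S_def)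
  have S_split: "S = {1..nat (- c)} \<union> T"
  proof (intro set_eqI iffI)
    fix x assume x: "x \<in> S"
    show "x \<in> {1..nat (- c)} \<union> T"
    proof (cases "int x \<le> - c")
      case True
      then have "x \<le> nat (- c)" by (metis nat_int nat_mono)
      then show ?thesis using x by (simp add: S_def)
    next
      case False
      then have "x \<in> T" using x unfolding S_def T_def by simp
      then show ?thesis by blast
    qed
  next
    fix x assume "x \<in> {1..nat (- c)} \<union> T"
    then show "x \<in> S"
      by (cases "x \<in> T") (auto simp: S_def T_def row_end_content_def)
  qed
  have "{1..nat (- c)} \<inter> T = {}" by (auto simp: T_def)
  moreover have "finite T" using finS S_split by simp
  ultimately have "card S = nat (- c) + card T"
    using S_split by (simp add: card_Un_disjoint)
  moreover have "c \<le> row_end_content p i \<longleftrightarrow> i \<in> S"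
    using i by (simp add: S_def)
  moreover have "count (contents p) c = card T"
    unfolding T_def by (rule count_contents_eq_card_rows)
  ultimately show ?thesis using S_iff[of i] i by linarith
qed

lemma partition_eqI:
  assumes p: "is_partition p" and q: "is_partition q" and eq: "\<And>i. 1 \<le> i \<Longrightarrow> part p i = part q i"
  shows "p = q"
proof -
  have len: "length p = length q"
    using part_gt0_iff[OF p, of "length q"] part_gt0_iff[OF q, of "length p"]
      part_gt0_iff[OF p, of "length p"] part_gt0_iff[OF q, of "length q"] eq
    by (metis One_nat_def Suc_leI antisym gr0I le_0_eq le_refl)
  show ?thesis
  proof (rule nth_equalityI[OF len])
    fix k assume "k < length p"
    then show "p ! k = q ! k" using eq[of "Suc k"] len by (simp add: part_def)
  qed
qed

lemma contents_inj:
  assumes p: "is_partition p" and q: "is_partition q" and c: "contents p = contents q"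
  shows "p = q"
proof (rule partition_eqI[OF p q])
  fix i :: nat assume i: "1 \<le> i"
  have "c \<le> row_end_content p i \<longleftrightarrow> c \<le> row_end_content q i" for c
    using le_row_end_content_iff[OF p i] le_row_end_content_iff[OF q i] c by simp
  then have "row_end_content p i = row_end_content q i"
    by (meson order.antisym order.refl)
  then show "part p i = part q i" by (simp add: row_end_content_def)
qed

section \<open>Frobenius coordinates\<close>

lemma le_part_iff_le_conj_part:
  assumes p: "is_partition p" and r: "1 \<le> r" and i: "1 \<le> i"
  shows "i \<le> part p r \<longleftrightarrow> r \<le> conj_part p i"
proof -
  define S where "S = {r \<in> {1..length p}. i \<le> part p r}"
  have "r \<in> S \<longleftrightarrow> 1 \<le> r \<and> r \<le> card S"
  proof (rule mem_downward_closed_iff)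
    show "r' \<in> S" if "r \<in> S" "1 \<le> r'" "r' \<le> r" for r r'
      using that part_antimono[OF p, of r' r] by (auto simp: S_def)
  qed (simp_all add: S_def)
  moreover have "r \<in> S \<longleftrightarrow> i \<le> part p r"
    using part_gt0_iff[OF p r] i r by (auto simp: S_def)
  ultimately show ?thesis using r by (simp add: conj_part_def S_def)
qed

lemma le_part_iff_le_durfee:
  assumes p: "is_partition p" and i: "1 \<le> i"
  shows "i \<le> part p i \<longleftrightarrow> i \<le> durfee p"
proof -
  define S where "S = {i \<in> {1..length p}. i \<le> part p i}"
  have "i \<in> S \<longleftrightarrow> 1 \<le> i \<and> i \<le> card S"
  proof (rule mem_downward_closed_iff)
    show "r' \<in> S" if "r \<in> S" "1 \<le> r'" "r' \<le> r" for r r'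
      using that part_antimono[OF p, of r' r] by (auto simp: S_def)
  qed (simp_all add: S_def)
  moreover have "i \<in> S \<longleftrightarrow> i \<le> part p i"
    using part_gt0_iff[OF p i] i by (auto simp: S_def)
  ultimately show ?thesis using i by (simp add: durfee_def S_def)
qed

lemma le_part_conj_part_if_le_durfee:
  assumes p: "is_partition p" and i: "1 \<le> i" "i \<le> durfee p"
  shows "i \<le> part p i" "i \<le> conj_part p i"
  using le_part_iff_le_durfee[OF p i(1)] le_part_iff_le_conj_part[OF p i(1) i(1)] i by auto

lemma conj_part_antimono:
  assumes p: "is_partition p" and "1 \<le> i" "i \<le> i'"
  shows "conj_part p i' \<le> conj_part p i"
  unfolding conj_part_def by (rule card_mono) (use assms in auto)

lemma frob_a_strict_antimono:
  assumes p: "is_partition p" "1 \<le> i" "i < i'" "i' \<le> durfee p"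
  shows "frob_a p i' < frob_a p i"
  using part_antimono[OF p(1), of i i'] le_part_conj_part_if_le_durfee[OF p(1), of i'] assms
  by (simp add: frob_a_def)

lemma frob_b_strict_antimono:
  assumes p: "is_partition p" "1 \<le> i" "i < i'" "i' \<le> durfee p"
  shows "frob_b p i' < frob_b p i"
  using conj_part_antimono[OF p(1), of i i'] le_part_conj_part_if_le_durfee[OF p(1), of i'] assms
  by (simp add: frob_b_def)

lemma inj_on_frob_a: "is_partition p \<Longrightarrow> inj_on (frob_a p) {1..durfee p}"
  unfolding inj_on_def using frob_a_strict_antimono[of p]
  by (metis atLeastAtMost_iff linorder_neqE_nat less_irrefl)

lemma inj_on_frob_b: "is_partition p \<Longrightarrow> inj_on (frob_b p) {1..durfee p}"
  unfolding inj_on_def using frob_b_strict_antimono[of p]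
  by (metis atLeastAtMost_iff linorder_neqE_nat less_irrefl)

text \<open>The boxes of content \<open>c\<close> lie on the diagonal line \<open>(i + nat (-c), i + nat c)\<close>,
  and the box with index \<open>i\<close> on it belongs to the \<open>i\<close>-th hook \<open>(a\<^sub>i | b\<^sub>i)\<close>.\<close>
lemma hook_box_in_diagram:
  assumes p: "is_partition p" and i: "1 \<le> i" "i \<le> durfee p"
    and c: "- int (frob_b p i) \<le> c" "c \<le> int (frob_a p i)"
  shows "(i + nat (- c), i + nat c) \<in> diagram p"
proof -
  have d: "i \<le> part p i" "i \<le> conj_part p i" using le_part_conj_part_if_le_durfee[OF p i] by auto
  show ?thesis
  proof (cases "0 \<le> c")
    case True
    then show ?thesis using c d i by (auto simp: diagram_part frob_a_def)
  next
    case False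
    have "i + nat (- c) \<le> conj_part p i" using c d False by (simp add: frob_b_def)
    then have "i \<le> part p (i + nat (- c))"
      using le_part_iff_le_conj_part[OF p, of "i + nat (- c)" i] i by simp
    then show ?thesis using False i by (auto simp: diagram_part)
  qed
qed

lemma diagram_box_on_hook:
  assumes p: "is_partition p" and b: "(r, k) \<in> diagram p" "content (r, k) = c"
  shows "\<exists>i\<in>{i \<in> {1..durfee p}. - int (frob_b p i) \<le> c \<and> c \<le> int (frob_a p i)}.
           (r, k) = (i + nat (- c), i + nat c)"
proof -
  have rk: "1 \<le> r" "1 \<le> k" "k \<le> part p r" "int k - int r = c"
    using b by (auto simp: diagram_part content_def)
  show ?thesis
  proof (cases "0 \<le> c")
    case True
    then have "r \<le> part p r" using rk by simp
    then have "r \<le> durfee p" using le_part_iff_le_durfee[OF p rk(1)] by simp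
    moreover have "c \<le> int (frob_a p r)" using rk \<open>r \<le> part p r\<close> by (simp add: frob_a_def)
    ultimately show ?thesis using rk True by (intro bexI[of _ r]) auto
  next
    case False
    then have kr: "k < r" using rk by simp
    have "part p r \<le> part p k" using part_antimono[OF p, of k r] rk kr by simp
    then have "k \<le> part p k" using rk by simp
    then have kd: "k \<le> durfee p" using le_part_iff_le_durfee[OF p rk(2)] by simp
    have "r \<le> conj_part p k" using le_part_iff_le_conj_part[OF p rk(1) rk(2)] rk by simp
    then have "- int (frob_b p k) \<le> c" using rk kr by (simp add: frob_b_def)
    then show ?thesis using rk False kd by (intro bexI[of _ k]) auto
  qed
qed

lemma contents_eq_sum_hooks:
  assumes p: "is_partition p"
  shows "contents p = (\<Sum>i\<in>{1..durfee p}. mset_set {- int (frob_b p i) .. int (frob_a p i)})"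
proof (rule multiset_eqI)
  fix c :: int
  let ?I = "{i \<in> {1..durfee p}. - int (frob_b p i) \<le> c \<and> c \<le> int (frob_a p i)}"
  have "bij_betw (\<lambda>i. (i + nat (- c), i + nat c)) ?I {b \<in> diagram p. content b = c}"
  proof (rule bij_betwI')
    fix x assume "x \<in> ?I"
    then show "(x + nat (- c), x + nat c) \<in> {b \<in> diagram p. content b = c}"
      using hook_box_in_diagram[OF p] by (auto simp: content_def)
  next
    fix y assume "y \<in> {b \<in> diagram p. content b = c}"
    then show "\<exists>x\<in>?I. y = (x + nat (- c), x + nat c)"
      using diagram_box_on_hook[OF p] by (cases y) auto
  qed auto
  then have "count (contents p) c = card ?I"
    by (simp add: count_contents bij_betw_same_card)
  also have "card ?I = (\<Sum>i\<in>{1..durfee p}. if - int (frob_b p i) \<le> c \<and> c \<le> int (frob_a p i) then 1 else 0)"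
    by (simp add: sum.inter_filter[symmetric])
  also have "\<dots> = count (\<Sum>i\<in>{1..durfee p}. mset_set {- int (frob_b p i) .. int (frob_a p i)}) c"
    unfolding count_sum by (rule sum.cong) (auto simp: count_mset_set)
  finally show "count (contents p) c = count (\<Sum>i\<in>{1..durfee p}. mset_set {- int (frob_b p i) .. int (frob_a p i)}) c" .
qed

section \<open>Rim hooks and residues of contents\<close>

lemma content_box_adj:
  assumes "box_adj y z" shows "content z = content y + 1 \<or> content z = content y - 1"
proof -
  obtain a b where y: "y = (a, b)" by (cases y)
  obtain c d where z: "z = (c, d)" by (cases z)
  have "\<bar>int a - int c\<bar> + \<bar>int b - int d\<bar> = 1" using assms by (simp add: box_adj_def y z)
  then have "(int d - int c) - (int b - int a) = 1 \<or> (int d - int c) - (int b - int a) = -1"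
    by (simp add: abs_if split: if_splits; presburger)
  then show ?thesis by (auto simp: content_def y z)
qed

lemma content_between_on_path:
  assumes "(\<lambda>u v. u \<in> D \<and> v \<in> D \<and> box_adj u v)\<^sup>*\<^sup>* x y" "x \<in> D"
  shows "\<forall>v. min (content x) (content y) \<le> v \<and> v \<le> max (content x) (content y) \<longrightarrow> v \<in> content ` D"
  using assms
proof (induction rule: rtranclp_induct)
  case base
  then show ?case by auto
next
  case (step y z)
  then have zD: "z \<in> D" and adj: "box_adj y z" by auto
  show ?case
  proof (intro allI impI)
    fix v assume v: "min (content x) (content z) \<le> v \<and> v \<le> max (content x) (content z)"
    show "v \<in> content ` D"
    proof (cases "v = content z")
      case True then show ?thesis using zD by auto
    next
      case False
      then have "min (content x) (content y) \<le> v \<and> v \<le> max (content x) (content y)"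
        using v content_box_adj[OF adj] by auto
      then show ?thesis using step.IH step.prems by auto
    qed
  qed
qed

text \<open>Two boxes of a skew shape with equal content span a rectangle inside the shape,
  which would contain a \<open>2 \<times> 2\<close> square.\<close>
lemma inj_on_content_rim_hook:
  assumes rh: "rim_hook l p q"
  shows "inj_on content (diagram p - diagram q)"
proof -
  define D where "D = diagram p - diagram q"
  have p: "is_partition p" and q: "is_partition q"
    and no2: "\<not> (\<exists>i j. {(i, j), (i, Suc j), (Suc i, j), (Suc i, Suc j)} \<subseteq> D)"
    using rh unfolding rim_hook_def D_def by auto
  have no_stacked: False
    if a: "a \<in> D" and b: "b \<in> D" and ab: "content a = content b" and lt: "fst a < fst b" for a b
  proof -
    obtain i j where aij: "a = (i, j)" by (cases a)
    obtain i' j' where bij: "b = (i', j')" by (cases b)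
    have ij: "i < i'" "j < j'" using lt ab by (auto simp: aij bij content_def)
    have ap: "(i, j) \<in> diagram p" "(i, j) \<notin> diagram q" using a by (auto simp: aij D_def)
    have bp: "(i', j') \<in> diagram p" using b by (auto simp: bij D_def)
    have i1: "1 \<le> i" "1 \<le> j" using ap by (auto simp: diagram_part)
    have inp: "(u, v) \<in> diagram p" if "i \<le> u" "u \<le> Suc i" "j \<le> v" "v \<le> Suc j" for u v
      using diagram_downward_closed[OF p bp, of u v] that ij i1 by auto
    have notq: "(u, v) \<notin> diagram q" if "i \<le> u" "j \<le> v" for u v
      using diagram_downward_closed[OF q _ i1(1) that(1) i1(2) that(2)] ap(2) by blast
    have "{(i, j), (i, Suc j), (Suc i, j), (Suc i, Suc j)} \<subseteq> D"
      using inp notq by (auto simp: D_def)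
    then show False using no2 by blast
  qed
  show ?thesis unfolding D_def[symmetric]
  proof (rule inj_onI)
    fix x y assume x: "x \<in> D" and y: "y \<in> D" and cxy: "content x = content y"
    show "x = y"
    proof (cases "fst x = fst y")
      case True
      then show ?thesis using cxy by (simp add: content_def prod_eq_iff)
    next
      case False
      then show ?thesis using no_stacked[OF x y cxy] no_stacked[OF y x cxy[symmetric]]
        by (meson linorder_neqE_nat)
    qed
  qed
qed

lemma rim_hook_contents:
  assumes rh: "rim_hook l p q" and l: "1 \<le> l"
  shows "\<exists>s. contents p = contents q + mset_set {s..s + int l - 1}"
proof -
  define D where "D = diagram p - diagram q"
  have sub: "diagram q \<subseteq> diagram p" and cD: "card D = l" and conn: "connected_boxes D"
    using rh unfolding rim_hook_def D_def by auto
  have inj: "inj_on content D"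
    using inj_on_content_rim_hook[OF rh] by (simp add: D_def)
  have split: "diagram p = diagram q \<union> D" using sub by (auto simp: D_def)
  have cp: "contents p = contents q + image_mset content (mset_set D)"
    unfolding contents_content split by (subst mset_set_Union) (auto simp: D_def)
  define S where "S = content ` D"
  have finS: "finite S" by (simp add: S_def D_def)
  have cardS: "card S = l" using card_image[OF inj] cD by (simp add: S_def)
  then have neS: "S \<noteq> {}" using l by auto
  have S_eq: "S = {Min S..Max S}"
  proof (intro set_eqI iffI)
    fix v assume "v \<in> S" then show "v \<in> {Min S..Max S}" using finS by simp
  next
    fix v assume v: "v \<in> {Min S..Max S}"
    obtain x where x: "x \<in> D" "content x = Min S" using Min_in[OF finS neS] by (auto simp: S_def)
    obtain y where y: "y \<in> D" "content y = Max S" using Max_in[OF finS neS] by (auto simp: S_def)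
    have "(\<lambda>u v. u \<in> D \<and> v \<in> D \<and> box_adj u v)\<^sup>*\<^sup>* x y"
      using conn x y unfolding connected_boxes_def by blast
    from content_between_on_path[OF this x(1)] show "v \<in> S" using v x y by (auto simp: S_def)
  qed
  then have "card {Min S..Max S} = l" using cardS by simp
  moreover have "Min S \<le> Max S" using Min_le[OF finS Max_in[OF finS neS]] .
  ultimately have "Max S = Min S + int l - 1" by (auto simp: nat_eq_iff)
  moreover have "image_mset content (mset_set D) = mset_set S"
    using image_mset_mset_set[OF inj] by (simp add: S_def)
  ultimately have "contents p = contents q + mset_set {Min S..Min S + int l - 1}"
    using cp S_eq by simp
  then show ?thesis by blast
qed

definition residue_count :: "nat \<Rightarrow> nat list \<Rightarrow> int \<Rightarrow> nat" where
  "residue_count l p r = size (filter_mset (\<lambda>c. c mod int l = r) (contents p))"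

lemma card_residue_interval:
  assumes l: "1 \<le> l" and r: "0 \<le> r" "r < int l"
  shows "card {c \<in> {s..s + int l - 1}. c mod int l = r} = 1"
proof -
  define c0 where "c0 = s + (r - s) mod int l"
  have "{c \<in> {s..s + int l - 1}. c mod int l = r} = {c0}"
  proof (intro set_eqI iffI)
    fix c assume "c \<in> {c \<in> {s..s + int l - 1}. c mod int l = r}"
    then have c: "s \<le> c" "c \<le> s + int l - 1" "c mod int l = r" by auto
    have "(c - s) mod int l = c - s" using c by (simp add: mod_pos_pos_trivial)
    moreover have "(c - s) mod int l = (r - s) mod int l"
      using c(3) r by (metis mod_diff_left_eq mod_pos_pos_trivial)
    ultimately show "c \<in> {c0}" by (simp add: c0_def)
  next
    fix c assume "c \<in> {c0}"
    moreover have "0 \<le> (r - s) mod int l" "(r - s) mod int l < int l" using l by auto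
    moreover have "c0 mod int l = r"
      unfolding c0_def using r by (simp add: mod_add_right_eq)
    ultimately show "c \<in> {c \<in> {s..s + int l - 1}. c mod int l = r}" by (simp add: c0_def)
  qed
  then show ?thesis by simp
qed

lemma residue_count_rim_hook:
  assumes rh: "rim_hook l p q" and l: "1 \<le> l" and r: "0 \<le> r" "r < int l"
  shows "residue_count l p r = residue_count l q r + 1"
proof -
  obtain s where s: "contents p = contents q + mset_set {s..s + int l - 1}"
    using rim_hook_contents[OF rh l] by blast
  have "size (filter_mset (\<lambda>c. c mod int l = r) (mset_set {s..s + int l - 1})) = 1"
    using card_residue_interval[OF l r, of s] by (simp add: filter_mset_mset_set)
  then show ?thesis using s by (simp add: residue_count_def)
qed

lemma residue_count_empty_core:
  assumes "empty_core l p" and l: "1 \<le> l"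
    and "0 \<le> r" "r < int l" "0 \<le> r'" "r' < int l"
  shows "residue_count l p r = residue_count l p r'"
  using assms
proof (induction rule: empty_core.induct)
  case empty
  then show ?case by (simp add: residue_count_def contents_def)
next
  case (step p q)
  then show ?case using residue_count_rim_hook[OF step.hyps(1) l] by simp
qed

lemma card_filter_insert:
  assumes "finite A" "x \<notin> A"
  shows "card {c\<in>insert x A. P c} = card {c\<in>A. P c} + (if P x then 1 else 0)"
proof (cases "P x")
  case True
  then have "{c\<in>insert x A. P c} = insert x {c\<in>A. P c}" by auto
  then show ?thesis using assms True by simp
next
  case False
  then have "{c\<in>insert x A. P c} = {c\<in>A. P c}" by auto
  then show ?thesis using False by simp
qed

lemma add1_mod_eq_add1_mod_iff:
  fixes x r l :: int
  assumes "0 \<le> r" "r < l"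
  shows "(x + 1) mod l = (r + 1) mod l \<longleftrightarrow> x mod l = r"
proof
  assume "(x + 1) mod l = (r + 1) mod l"
  then have "((x + 1) - 1) mod l = ((r + 1) - 1) mod l"
    by (rule mod_diff_cong) simp
  then show "x mod l = r" using assms by simp
next
  assume "x mod l = r"
  then have "x mod l = r mod l" using assms by simp
  then show "(x + 1) mod l = (r + 1) mod l" by (rule mod_add_cong) simp
qed

text \<open>Both sides count the same set: the \<open>c \<equiv> r\<close> in \<open>[s - 1..e]\<close> correspond to the
  \<open>c \<equiv> r + 1\<close> in \<open>[s..e + 1]\<close> under \<open>c \<mapsto> c + 1\<close>.\<close>
lemma card_residue_interval_shift:
  fixes s e :: int and l :: nat
  assumes l: "1 \<le> l" and r: "0 \<le> r" "r < int l" and se: "s \<le> e + 1"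
  shows "card {c\<in>{s..e}. c mod int l = r} + (if (s - 1) mod int l = r then 1 else 0)
       = card {c\<in>{s..e}. c mod int l = (r + 1) mod int l} + (if e mod int l = r then 1 else 0)"
proof -
  have "card {c\<in>{s..s - 1 + int k}. c mod int l = r} + (if (s - 1) mod int l = r then 1 else 0)
      = card {c\<in>{s..s - 1 + int k}. c mod int l = (r + 1) mod int l}
        + (if (s - 1 + int k) mod int l = r then 1 else 0)" for k
  proof (induction k)
    case 0
    then show ?case by simp
  next
    case (Suc k)
    have ins: "{s..s - 1 + int (Suc k)} = insert (s + int k) {s..s - 1 + int k}" by auto
    have new: "((s + int k) mod int l = (r + 1) mod int l) = ((s - 1 + int k) mod int l = r)"
      using add1_mod_eq_add1_mod_iff[OF r, of "s - 1 + int k"] by simp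
    have A: "card {c\<in>{s..s - 1 + int (Suc k)}. c mod int l = r}
        = card {c\<in>{s..s - 1 + int k}. c mod int l = r} + (if (s + int k) mod int l = r then 1 else 0)"
      unfolding ins by (rule card_filter_insert) simp_all
    have B: "card {c\<in>{s..s - 1 + int (Suc k)}. c mod int l = (r + 1) mod int l}
        = card {c\<in>{s..s - 1 + int k}. c mod int l = (r + 1) mod int l}
          + (if (s + int k) mod int l = (r + 1) mod int l then 1 else 0)"
      unfolding ins by (rule card_filter_insert) simp_all
    have C: "s - 1 + int (Suc k) = s + int k" by simp
    show ?case unfolding A B by (simp only: C new) (use Suc.IH in \<open>simp split: if_split\<close>)
  qed
  from this[of "nat (e - s + 1)"] show ?thesis using se by simp
qed

context
  fixes l :: nat and \<mu> :: "nat list"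
  assumes l: "1 \<le> l" and mu: "is_partition \<mu>" and ec: "empty_core l \<mu>"
begin

lemma residue_count_eq_sum_hooks:
  "residue_count l \<mu> r
     = (\<Sum>i\<in>{1..durfee \<mu>}. card {c\<in>{- int (frob_b \<mu> i)..int (frob_a \<mu> i)}. c mod int l = r})"
  unfolding residue_count_def contents_eq_sum_hooks[OF mu]
  by (simp add: filter_mset_sum filter_mset_mset_set)

text \<open>Summing \<open>card_residue_interval_shift\<close> over the hooks \<open>[-b\<^sub>i..a\<^sub>i]\<close>, the residue
  counts cancel because they are balanced for an empty core.\<close>
lemma card_leg_residue_eq_card_arm_residue:
  assumes r: "0 \<le> r" "r < int l"
  shows "card {i\<in>{1..durfee \<mu>}. (- int (frob_b \<mu> i) - 1) mod int l = r}
       = card {i\<in>{1..durfee \<mu>}. int (frob_a \<mu> i) mod int l = r}"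
proof -
  let ?I = "{1..durfee \<mu>}"
  let ?g = "\<lambda>i r. card {c\<in>{- int (frob_b \<mu> i)..int (frob_a \<mu> i)}. c mod int l = r}"
  have r1: "0 \<le> (r + 1) mod int l" "(r + 1) mod int l < int l" using l by auto
  have "(\<Sum>i\<in>?I. ?g i r) + (\<Sum>i\<in>?I. (if (- int (frob_b \<mu> i) - 1) mod int l = r then 1 else 0))
      = (\<Sum>i\<in>?I. ?g i ((r + 1) mod int l)) + (\<Sum>i\<in>?I. (if int (frob_a \<mu> i) mod int l = r then 1 else 0))"
    using card_residue_interval_shift[OF l r] by (simp add: sum.distrib[symmetric])
  moreover have "(\<Sum>i\<in>?I. ?g i r) = (\<Sum>i\<in>?I. ?g i ((r + 1) mod int l))"
    using residue_count_empty_core[OF ec l r r1] unfolding residue_count_eq_sum_hooks .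
  ultimately have "(\<Sum>i\<in>?I. (if (- int (frob_b \<mu> i) - 1) mod int l = r then 1 else 0::nat))
      = (\<Sum>i\<in>?I. (if int (frob_a \<mu> i) mod int l = r then 1 else 0))"
    by simp
  then show ?thesis by (simp add: sum.inter_filter[symmetric])
qed

end

lemma typeA_eq_iff:
  assumes l: "1 \<le> l" and j: "j < l"
  shows "typeA l \<mu> i = j \<longleftrightarrow> int (frob_a \<mu> i) mod int l = (- int j - 1) mod int l"
proof -
  have "0 \<le> (- (int (frob_a \<mu> i) + 1)) mod int l" using l by simp
  then have "typeA l \<mu> i = j \<longleftrightarrow> (- (int (frob_a \<mu> i) + 1)) mod int l = int j mod int l"
    unfolding typeA_def using j by (auto simp: nat_eq_iff)
  also have "\<dots> \<longleftrightarrow> int l dvd (- (int (frob_a \<mu> i) + 1) - int j)"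
    by (rule mod_eq_dvd_iff)
  also have "\<dots> \<longleftrightarrow> int l dvd (int (frob_a \<mu> i) - (- int j - 1))"
  proof -
    have "int (frob_a \<mu> i) - (- int j - 1) = - (- (int (frob_a \<mu> i) + 1) - int j)" by simp
    then show ?thesis by (simp only: dvd_minus_iff)
  qed
  also have "\<dots> \<longleftrightarrow> int (frob_a \<mu> i) mod int l = (- int j - 1) mod int l"
    by (rule mod_eq_dvd_iff[symmetric])
  finally show ?thesis .
qed

lemma typeL_eq_iff:
  assumes l: "1 \<le> l" and j: "j < l"
  shows "typeL l \<mu> i = j \<longleftrightarrow> (- int (frob_b \<mu> i) - 1) mod int l = (- int j - 1) mod int l"
proof -
  have "typeL l \<mu> i = j \<longleftrightarrow> int (frob_b \<mu> i) mod int l = int j mod int l"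
    unfolding typeL_def using j by (simp add: of_nat_mod[symmetric])
  also have "\<dots> \<longleftrightarrow> int l dvd (int (frob_b \<mu> i) - int j)"
    by (rule mod_eq_dvd_iff)
  also have "\<dots> \<longleftrightarrow> int l dvd ((- int (frob_b \<mu> i) - 1) - (- int j - 1))"
  proof -
    have "(- int (frob_b \<mu> i) - 1) - (- int j - 1) = - (int (frob_b \<mu> i) - int j)" by simp
    then show ?thesis by (simp only: dvd_minus_iff)
  qed
  also have "\<dots> \<longleftrightarrow> (- int (frob_b \<mu> i) - 1) mod int l = (- int j - 1) mod int l"
    by (rule mod_eq_dvd_iff[symmetric])
  finally show ?thesis .
qed

lemma card_typeA_eq_card_typeL:
  assumes l: "1 \<le> l" and mu: "is_partition \<mu>" and ec: "empty_core l \<mu>" and j: "j < l"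
  shows "card {i\<in>{1..durfee \<mu>}. typeA l \<mu> i = j} = card {i\<in>{1..durfee \<mu>}. typeL l \<mu> i = j}"
proof -
  define r where "r = (- int j - 1) mod int l"
  have r: "0 \<le> r" "r < int l" using l by (auto simp: r_def)
  show ?thesis
    using card_leg_residue_eq_card_arm_residue[OF l mu ec r]
    by (simp add: typeA_eq_iff[OF l j] typeL_eq_iff[OF l j] r_def)
qed

section \<open>Partitions with prescribed hooks\<close>

text \<open>Wrap a hook with arm \<open>a\<close> and leg \<open>b\<close> around \<open>p\<close>: a new first row of length \<open>a + 1\<close>
  and a new first column of length \<open>b + 1\<close>.\<close>
definition add_hook :: "nat \<Rightarrow> nat \<Rightarrow> nat list \<Rightarrow> nat list" where
  "add_hook a b p = Suc a # map Suc (p @ replicate (b - length p) 0)"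

lemma is_partition_add_hook:
  assumes p: "is_partition p" and lb: "length p \<le> b" and pa: "\<forall>x\<in>set p. x \<le> a"
  shows "is_partition (add_hook a b p)"
proof -
  have "sorted_wrt (\<ge>) p" using p by (simp add: is_partition_def)
  then have "sorted_wrt (\<ge>) (p @ replicate (b - length p) 0)"
    by (auto simp: sorted_wrt_append sorted_wrt_iff_nth_less[of _ "replicate _ _"])
  then have "sorted_wrt (\<ge>) (map Suc (p @ replicate (b - length p) 0))"
    unfolding sorted_wrt_map by simp
  then show ?thesis unfolding is_partition_def add_hook_def using pa by auto
qed

lemma part_add_hook_1: "part (add_hook a b p) (Suc 0) = Suc a"
  by (simp add: part_def add_hook_def)

lemma part_add_hook_Suc:
  assumes lb: "length p \<le> b" and r: "1 \<le> r"
  shows "part (add_hook a b p) (Suc r) = (if r \<le> b then Suc (part p r) else 0)"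
proof (cases "r \<le> b")
  case True
  have len: "r - 1 < length (p @ replicate (b - length p) 0)" using True r lb by simp
  have "add_hook a b p ! r = map Suc (p @ replicate (b - length p) 0) ! (r - 1)"
    using r by (simp add: add_hook_def nth_Cons' del: map_append)
  also have "\<dots> = Suc ((p @ replicate (b - length p) 0) ! (r - 1))" by (rule nth_map[OF len])
  also have "(p @ replicate (b - length p) 0) ! (r - 1) = part p r"
    using True r lb by (auto simp: nth_append part_def)
  finally show ?thesis using True lb r by (simp add: part_def add_hook_def)
next
  case False
  then show ?thesis using lb by (simp add: part_def add_hook_def)
qed

lemma diagram_add_hook_subset:
  assumes lb: "length p \<le> b"
  shows "diagram (add_hook a b p)
    \<subseteq> ({1} \<times> {1..Suc a}) \<union> ({2..Suc b} \<times> {1}) \<union> (\<lambda>(i, j). (Suc i, Suc j)) ` diagram p"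
proof
  fix x assume x: "x \<in> diagram (add_hook a b p)"
  obtain i j where ij: "x = (i, j)" "1 \<le> i" "1 \<le> j" "j \<le> part (add_hook a b p) i"
    using x by (cases x) (auto simp: diagram_part)
  show "x \<in> ({1} \<times> {1..Suc a}) \<union> ({2..Suc b} \<times> {1}) \<union> (\<lambda>(i, j). (Suc i, Suc j)) ` diagram p"
  proof (cases "i = 1")
    case True then show ?thesis using ij by (simp add: part_add_hook_1)
  next
    case False
    then obtain r where r: "i = Suc r" "1 \<le> r" using ij by (cases i) auto
    have jr: "j \<le> (if r \<le> b then Suc (part p r) else 0)"
      using ij r part_add_hook_Suc[OF lb r(2), of a] by simp
    then have rb: "r \<le> b" using ij by (simp split: if_splits)
    show ?thesis
    proof (cases "j = 1")
      case True then show ?thesis using ij r rb by auto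
    next
      case False
      then obtain c where c: "j = Suc c" "1 \<le> c" using ij by (cases j) auto
      have "(r, c) \<in> diagram p" using jr rb c r by (auto simp: diagram_part)
      then show ?thesis by (auto simp: ij r c image_iff intro!: bexI[of _ "(r, c)"])
    qed
  qed
qed

lemma diagram_add_hook:
  assumes lb: "length p \<le> b"
  shows "diagram (add_hook a b p)
    = ({1} \<times> {1..Suc a}) \<union> ({2..Suc b} \<times> {1}) \<union> (\<lambda>(i, j). (Suc i, Suc j)) ` diagram p"
proof
  have "{1} \<times> {1..Suc a} \<subseteq> diagram (add_hook a b p)"
    by (auto simp: diagram_part part_add_hook_1)
  moreover have "{2..Suc b} \<times> {1} \<subseteq> diagram (add_hook a b p)"
  proof
    fix x assume "x \<in> {2..Suc b} \<times> {1::nat}"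
    then obtain r where "x = (Suc r, 1)" "1 \<le> r" "r \<le> b"
    proof -
      obtain i where "x = (i, 1)" "2 \<le> i" "i \<le> Suc b" using \<open>x \<in> {2..Suc b} \<times> {1}\<close> by auto
      then show thesis using that[of "i - 1"] by simp
    qed
    then show "x \<in> diagram (add_hook a b p)"
      using part_add_hook_Suc[OF lb, of r a] by (simp add: diagram_part)
  qed
  moreover have "(\<lambda>(i, j). (Suc i, Suc j)) ` diagram p \<subseteq> diagram (add_hook a b p)"
  proof
    fix x assume "x \<in> (\<lambda>(i, j). (Suc i, Suc j)) ` diagram p"
    then obtain r c where rc: "x = (Suc r, Suc c)" "(r, c) \<in> diagram p" by auto
    then have "1 \<le> r" "r \<le> length p" "1 \<le> c" "c \<le> part p r" by (auto simp: diagram_def)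
    then show "x \<in> diagram (add_hook a b p)"
      using rc part_add_hook_Suc[OF lb, of r a] lb by (simp add: diagram_part)
  qed
  ultimately show "({1} \<times> {1..Suc a}) \<union> ({2..Suc b} \<times> {1}) \<union> (\<lambda>(i, j). (Suc i, Suc j)) ` diagram p
      \<subseteq> diagram (add_hook a b p)" by blast
qed (rule diagram_add_hook_subset[OF lb])

lemma content_first_row: "image_mset content (mset_set ({1} \<times> {1..Suc a})) = mset_set {0..int a}"
proof -
  have "inj_on content ({1} \<times> {1..Suc a})" by (auto simp: inj_on_def content_def)
  moreover have "content ` ({1} \<times> {1..Suc a}) = {0..int a}"
  proof (intro set_eqI iffI)
    fix v assume "v \<in> {0..int a}"
    then show "v \<in> content ` ({1} \<times> {1..Suc a})"
      by (intro image_eqI[of _ _ "(1, nat v + 1)"]) (auto simp: content_def)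
  qed (auto simp: content_def)
  ultimately show ?thesis by (simp add: image_mset_mset_set)
qed

lemma content_first_column: "image_mset content (mset_set ({2..Suc b} \<times> {1})) = mset_set {- int b..-1}"
proof -
  have "inj_on content ({2..Suc b} \<times> {1})" by (auto simp: inj_on_def content_def)
  moreover have "content ` ({2..Suc b} \<times> {1}) = {- int b..-1}"
  proof (intro set_eqI iffI)
    fix v assume "v \<in> {- int b..-1}"
    then show "v \<in> content ` ({2..Suc b} \<times> {1})"
      by (intro image_eqI[of _ _ "(nat (- v) + 1, 1)"]) (auto simp: content_def)
  qed (auto simp: content_def)
  ultimately show ?thesis by (simp add: image_mset_mset_set)
qed

lemma contents_add_hook:
  assumes lb: "length p \<le> b"
  shows "contents (add_hook a b p) = contents p + mset_set {0..int a} + mset_set {- int b..-1}"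
proof -
  define R where "R = {1::nat} \<times> {1..Suc a}"
  define C where "C = {2..Suc b} \<times> {1::nat}"
  define sh where "sh = (\<lambda>(i::nat, j::nat). (Suc i, Suc j))"
  have d: "diagram (add_hook a b p) = R \<union> C \<union> sh ` diagram p"
    using diagram_add_hook[OF lb] by (simp add: R_def C_def sh_def)
  have injsh: "inj_on sh (diagram p)" by (auto simp: sh_def inj_on_def)
  have "R \<inter> C = {}" "(R \<union> C) \<inter> sh ` diagram p = {}"
    by (auto simp: R_def C_def sh_def diagram_def)
  then have m: "mset_set (R \<union> C \<union> sh ` diagram p)
      = mset_set R + mset_set C + image_mset sh (mset_set (diagram p))"
    by (simp add: R_def C_def mset_set_Union image_mset_mset_set[OF injsh])
  have cs: "image_mset content (image_mset sh (mset_set (diagram p))) = contents p"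
    unfolding contents_content image_mset.compositionality
    by (rule image_mset_cong) (simp add: sh_def content_def case_prod_beta)
  show ?thesis unfolding contents_content d m image_mset_union
    using cs content_first_row[of a, folded R_def] content_first_column[of b, folded C_def]
    by (simp add: contents_content add.commute add.left_commute)
qed

text \<open>Induction on the number of hooks, wrapping the hook with the largest arm and leg
  around the partition built from the others.\<close>
lemma exists_partition_with_hooks:
  assumes "finite SA" "finite SB" "card SA = card SB"
  shows "\<exists>p. is_partition p \<and>
       contents p = (\<Sum>\<alpha>\<in>SA. mset_set {0..int \<alpha>}) + (\<Sum>\<beta>\<in>SB. mset_set {- int \<beta>..-1}) \<and>
       (\<forall>a b. (\<forall>\<alpha>\<in>SA. \<alpha> < a) \<longrightarrow> (\<forall>\<beta>\<in>SB. \<beta> < b) \<longrightarrow> length p \<le> b \<and> (\<forall>x\<in>set p. x \<le> a))"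
  using assms
proof (induction "card SA" arbitrary: SA SB)
  case 0
  then have "SA = {}" "SB = {}" by auto
  moreover have "is_partition []" by (simp add: is_partition_def)
  ultimately show ?case by (intro exI[of _ "[]"]) (simp add: contents_def)
next
  case (Suc n)
  then have neA: "SA \<noteq> {}" and neB: "SB \<noteq> {}" by auto
  define a where "a = Max SA"
  define b where "b = Max SB"
  have aA: "a \<in> SA" and bB: "b \<in> SB" using Suc.prems neA neB by (auto simp: a_def b_def)
  obtain p where p: "is_partition p"
    and cp: "contents p = (\<Sum>\<alpha>\<in>SA - {a}. mset_set {0..int \<alpha>}) + (\<Sum>\<beta>\<in>SB - {b}. mset_set {- int \<beta>..-1})"
    and bd: "\<forall>a' b'. (\<forall>\<alpha>\<in>SA - {a}. \<alpha> < a') \<longrightarrow> (\<forall>\<beta>\<in>SB - {b}. \<beta> < b') \<longrightarrow>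
               length p \<le> b' \<and> (\<forall>x\<in>set p. x \<le> a')"
  proof -
    have "n = card (SA - {a})" "card (SA - {a}) = card (SB - {b})"
      using Suc.hyps(2) Suc.prems aA bB by simp_all
    from Suc.hyps(1)[OF this(1) _ _ this(2)] Suc.prems show thesis using that by blast
  qed
  have "\<forall>\<alpha>\<in>SA - {a}. \<alpha> < a" "\<forall>\<beta>\<in>SB - {b}. \<beta> < b"
    using Suc.prems by (auto simp: a_def b_def order.strict_iff_order)
  then have lb: "length p \<le> b" and pa: "\<forall>x\<in>set p. x \<le> a" using bd by blast+
  have "contents (add_hook a b p)
      = (\<Sum>\<alpha>\<in>SA. mset_set {0..int \<alpha>}) + (\<Sum>\<beta>\<in>SB. mset_set {- int \<beta>..-1})"
    unfolding contents_add_hook[OF lb] cp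
    using Suc.prems aA bB by (simp add: sum.remove add.commute add.left_commute)
  moreover have "length (add_hook a b p) \<le> b'" "\<forall>x\<in>set (add_hook a b p). x \<le> a'"
    if "\<forall>\<alpha>\<in>SA. \<alpha> < a'" "\<forall>\<beta>\<in>SB. \<beta> < b'" for a' b'
  proof -
    have "a < a'" "b < b'" using that aA bB by auto
    then show "length (add_hook a b p) \<le> b'" "\<forall>x\<in>set (add_hook a b p). x \<le> a'"
      using lb pa by (auto simp: add_hook_def)
  qed
  ultimately show ?case using is_partition_add_hook[OF p lb pa] by blast
qed

section \<open>Sums of the parameters \<open>\<theta>\<close> and the exponents \<open>\<alpha>\<close>\<close>

context
  fixes l :: nat and h :: rat and H :: "nat \<Rightarrow> rat"
  assumes l: "1 \<le> l"
begin

definition theta_sum :: "int \<Rightarrow> int \<Rightarrow> rat" where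
  "theta_sum a b = (\<Sum>t\<in>{a..b}. theta l h H t)"

lemma theta_add_mult: "theta l h H (k + int l * q) = theta l h H k"
  by (simp add: theta_def)

lemma theta_sum_split:
  assumes "a \<le> b + 1" "b \<le> c"
  shows "theta_sum a c = theta_sum a b + theta_sum (b + 1) c"
proof -
  have "{a..c} = {a..b} \<union> {b+1..c}" using assms by auto
  then show ?thesis unfolding theta_sum_def by (simp add: sum.union_disjoint)
qed

lemma theta_sum_empty: "b < a \<Longrightarrow> theta_sum a b = 0"
  by (simp add: theta_sum_def)

lemma theta_sum_shift: "theta_sum (a + int l * q) (b + int l * q) = theta_sum a b"
  unfolding theta_sum_def
proof (rule sum.reindex_bij_witness[where i="\<lambda>t. t + int l * q" and j="\<lambda>t. t - int l * q"])
  fix t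
  show "theta l h H (t - int l * q) = theta l h H t"
    using theta_add_mult[of "t - int l * q" q] by simp
qed auto

lemma theta_sum_1_eq_ee:
  assumes "n < l"
  shows "theta_sum 1 (int n) = ee H n"
proof -
  have "theta_sum 1 (int n) = (\<Sum>s\<in>{1..n}. theta l h H (int s))"
    unfolding theta_sum_def
    by (rule sum.reindex_bij_witness[where i="\<lambda>s. int s" and j="\<lambda>t. nat t"]) auto
  also have "\<dots> = (\<Sum>s\<in>{1..n}. H s)"
  proof (rule sum.cong)
    fix s assume s: "s \<in> {1..n}"
    then have "int s mod int l = int s" using assms by simp
    then show "theta l h H (int s) = H s" using s by (simp add: theta_def)
  qed simp
  finally show ?thesis by (simp add: ee_def)
qed

lemma theta_sum_1_l: "theta_sum 1 (int l) = - h"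
proof -
  have "theta_sum 1 (int l) = theta_sum 1 (int (l - 1)) + theta_sum (int (l - 1) + 1) (int l)"
    using l by (intro theta_sum_split) auto
  also have "theta_sum (int (l - 1) + 1) (int l) = - h + H0 l H"
    using l by (simp add: theta_sum_def of_nat_diff theta_def)
  also have "theta_sum 1 (int (l - 1)) = ee H (l - 1)" using l by (intro theta_sum_1_eq_ee) auto
  finally show ?thesis by (simp add: H0_def ee_def)
qed

lemma theta_sum_period: "theta_sum (x + 1) (x + int l) = - h"
proof -
  define x' where "x' = x mod int l"
  have x'r: "0 \<le> x'" "x' < int l" using l by (auto simp: x'_def)
  have "x + 1 = (x' + 1) + int l * (x div int l)" "x + int l = (x' + int l) + int l * (x div int l)"
    by (simp_all add: x'_def)
  then have "theta_sum (x + 1) (x + int l) = theta_sum (x' + 1) (x' + int l)"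
    by (simp only: theta_sum_shift)
  also have "\<dots> = theta_sum (x' + 1) (int l) + theta_sum (int l + 1) (x' + int l)"
    using x'r by (intro theta_sum_split) auto
  also have "theta_sum (int l + 1) (x' + int l) = theta_sum 1 x'"
    using theta_sum_shift[of 1 1 x'] by (simp add: add.commute)
  also have "theta_sum (x' + 1) (int l) + theta_sum 1 x' = theta_sum 1 (int l)"
    using theta_sum_split[of 1 x' "int l"] x'r by simp
  finally show ?thesis using theta_sum_1_l by simp
qed

lemma theta_sum_add_periods:
  assumes "0 \<le> y"
  shows "theta_sum (x + 1) (x + y + int l * int q) = theta_sum (x + 1) (x + y) - of_nat q * h"
proof (induction q)
  case 0 then show ?case by simp
next
  case (Suc q)
  have "theta_sum (x + 1) (x + y + int l * int (Suc q))
      = theta_sum (x + 1) (x + y + int l * int q)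
        + theta_sum (x + y + int l * int q + 1) (x + y + int l * int (Suc q))"
    using assms l by (intro theta_sum_split) (auto simp: algebra_simps)
  also have "theta_sum (x + y + int l * int q + 1) (x + y + int l * int (Suc q)) = - h"
    using theta_sum_period[of "x + y + int l * int q"] by (simp add: algebra_simps)
  finally show ?case using Suc.IH by (simp add: algebra_simps)
qed

lemma theta_sum_1_mod_eq_ee':
  assumes b: "1 \<le> b"
  shows "theta_sum 1 (int ((b - 1) mod l + 1)) = ee' h H (b mod l)"
proof -
  define \<beta> where "\<beta> = (b - 1) mod l + 1"
  have bm: "b mod l = (if \<beta> = l then 0 else \<beta>)"
    using b l mod_Suc[of "b - 1" l] by (simp add: \<beta>_def)
  show ?thesis
  proof (cases "\<beta> = l")
    case True then show ?thesis using bm theta_sum_1_l by (simp add: ee'_def \<beta>_def)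
  next
    case False
    have "(b - 1) mod l < l" using l by simp
    then have "\<beta> < l" using False by (simp add: \<beta>_def)
    then have "theta_sum 1 (int \<beta>) = ee H \<beta>" by (rule theta_sum_1_eq_ee)
    moreover have "b mod l = \<beta>" "\<beta> \<noteq> 0" using bm False by (auto simp: \<beta>_def)
    ultimately show ?thesis by (simp add: ee'_def \<beta>_def)
  qed
qed

lemma theta_sum_upper_tail:
  assumes "\<rho> < l"
  shows "theta_sum (int l - int \<rho> + 1) (int l) = (if \<rho> = 0 then 0 else - h - ee H (l - \<rho>))"
proof (cases "\<rho> = 0")
  case True then show ?thesis by (simp add: theta_sum_empty)
next
  case False
  have "theta_sum 1 (int l)
      = theta_sum 1 (int (l - \<rho>)) + theta_sum (int (l - \<rho>) + 1) (int l)"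
    using assms by (intro theta_sum_split) auto
  moreover have "theta_sum 1 (int (l - \<rho>)) = ee H (l - \<rho>)"
    using False assms by (intro theta_sum_1_eq_ee) auto
  moreover have "int (l - \<rho>) + 1 = int l - int \<rho> + 1" using assms by simp
  ultimately show ?thesis using False theta_sum_1_l by simp
qed

lemma ee''_mod_eq:
  "ee'' l h H (a mod l) = (if (a + 1) mod l = 0 then 0 else h + ee H (l - (a + 1) mod l))"
proof -
  have am: "(a + 1) mod l = (if Suc (a mod l) = l then 0 else Suc (a mod l))"
    using mod_Suc[of a l] by simp
  show ?thesis
  proof (cases "(a + 1) mod l = 0")
    case True
    then have "a mod l = l - 1" using am l by (auto split: if_splits)
    then show ?thesis using True by (simp add: ee''_def)
  next
    case False
    then have "(a + 1) mod l = Suc (a mod l)" "a mod l \<noteq> l - 1" using am l by (auto split: if_splits)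
    then show ?thesis using False by (simp add: ee''_def ee_def)
  qed
qed

lemma alpha_leg_eq_theta_sum:
  assumes "1 \<le> j" "j \<le> int b"
  shows "alpha l h H (int b + 1) (int a + int b + 1) j = theta_sum (int b + 1 - j) (int b)"
proof -
  have "(\<Sum>s\<in>{1..j}. theta l h H (int b + 1 - s)) = theta_sum (int b + 1 - j) (int b)"
    unfolding theta_sum_def
    by (rule sum.reindex_bij_witness[where i="\<lambda>t. int b + 1 - t" and j="\<lambda>s. int b + 1 - s"]) auto
  then show ?thesis using assms by (simp add: alpha_def)
qed

lemma alpha_arm_eq_theta_sum:
  assumes "int b + 1 \<le> j" "j \<le> int a + int b + 1"
  shows "alpha l h H (int b + 1) (int a + int b + 1) j = - theta_sum (- int a) (int b - j)"
proof (cases "j = int a + int b + 1")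
  case True
  then show ?thesis by (simp add: alpha_def theta_sum_empty)
next
  case False
  have "(\<Sum>s\<in>{0..int a + int b - j}. theta l h H (- int a + s)) = theta_sum (- int a) (int b - j)"
    unfolding theta_sum_def
    by (rule sum.reindex_bij_witness[where i="\<lambda>t. t + int a" and j="\<lambda>s. s - int a"]) auto
  then show ?thesis using assms False by (simp add: alpha_def algebra_simps)
qed

lemma alpha_leg_value:
  assumes b: "1 \<le> b" and t: "t \<le> (b - 1) div l"
  shows "alpha l h H (int b + 1) (int a + int b + 1) (int b - int l * int t)
       = ee' h H (b mod l) - of_nat ((b - 1) div l - t) * h"
proof -
  define D where "D = (b - 1) div l"
  define \<beta> where "\<beta> = (b - 1) mod l + 1"
  have "b = l * D + \<beta>" using b by (simp add: D_def \<beta>_def)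
  then have bD: "int b = int l * int t + int \<beta> + int l * int (D - t)"
    using t by (simp add: D_def algebra_simps of_nat_diff flip: of_nat_mult)
  have "alpha l h H (int b + 1) (int a + int b + 1) (int b - int l * int t)
      = theta_sum (int b + 1 - (int b - int l * int t)) (int b)"
    using bD by (intro alpha_leg_eq_theta_sum) (auto simp: \<beta>_def)
  also have "int b + 1 - (int b - int l * int t) = int l * int t + 1" by simp
  also have "theta_sum (int l * int t + 1) (int b)
      = theta_sum (int l * int t + 1) (int l * int t + int \<beta>) - of_nat (D - t) * h"
    unfolding bD by (rule theta_sum_add_periods) simp
  also have "theta_sum (int l * int t + 1) (int l * int t + int \<beta>) = theta_sum 1 (int \<beta>)"
    using theta_sum_shift[where a=1 and q="int t" and b="int \<beta>"] by (simp add: add.commute)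
  also have "\<dots> = ee' h H (b mod l)"
    unfolding \<beta>_def by (rule theta_sum_1_mod_eq_ee'[OF b])
  finally show ?thesis by (simp add: D_def)
qed

lemma alpha_arm_value:
  assumes t: "1 \<le> t" "t \<le> (a + 1) div l"
  shows "alpha l h H (int b + 1) (int a + int b + 1) (int b + int l * int t)
       = ee'' l h H (a mod l) + of_nat ((a + 1) div l - t) * h"
proof -
  define A where "A = (a + 1) div l"
  define \<rho> where "\<rho> = (a + 1) mod l"
  have aA: "a + 1 = l * A + \<rho>" by (simp add: A_def \<rho>_def)
  have \<rho>l: "\<rho> < l" using l by (simp add: \<rho>_def)
  have tA: "t \<le> A" using t by (simp add: A_def)
  then have "l * t \<le> a + 1" using aA by (metis le_add1 mult_le_mono2 order_trans)
  then have "alpha l h H (int b + 1) (int a + int b + 1) (int b + int l * int t)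
      = - theta_sum (- int a) (- int l * int t)"
    using l t by (subst alpha_arm_eq_theta_sum) (auto simp flip: of_nat_mult)
  also have "- int l * int t = (- int a - 1) + int \<rho> + int l * int (A - t)"
    using aA tA by (simp add: algebra_simps of_nat_diff flip: of_nat_mult of_nat_add; simp add: algebra_simps)
  also have "theta_sum (- int a) ((- int a - 1) + int \<rho> + int l * int (A - t))
      = theta_sum (- int a) ((- int a - 1) + int \<rho>) - of_nat (A - t) * h"
    using theta_sum_add_periods[where y="int \<rho>" and x="- int a - 1" and q="A - t"] by simp
  also have "theta_sum (- int a) ((- int a - 1) + int \<rho>) = theta_sum (int l - int \<rho> + 1) (int l)"
  proof -
    have e1: "- int a = (int l - int \<rho> + 1) + int l * (- int A - 1)"
      using aA by (simp add: algebra_simps flip: of_nat_mult of_nat_add; simp add: algebra_simps)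
    have e2: "(- int a - 1) + int \<rho> = int l + int l * (- int A - 1)"
      using aA by (simp add: algebra_simps flip: of_nat_mult of_nat_add; simp add: algebra_simps)
    show ?thesis by (rule trans[OF arg_cong2[where f=theta_sum, OF e1 e2] theta_sum_shift])
  qed
  also have "\<dots> = (if \<rho> = 0 then 0 else - h - ee H (l - \<rho>))"
    by (rule theta_sum_upper_tail[OF \<rho>l])
  finally show ?thesis unfolding ee''_mod_eq by (simp add: A_def \<rho>_def)
qed

end

section \<open>Splitting \<open>Eig\<close> into arm and leg contributions\<close>

lemma mod_diff_mult_self: "(x - int l * t) mod int l = (x::int) mod int l"
proof -
  have "x - int l * t = x + int l * (- t)" by simp
  then show ?thesis by (simp only: mod_mult_self2)
qed

lemma nat_ceiling_divide:
  assumes l: "1 \<le> l"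
  shows "nat \<lceil>(of_nat b :: rat) / of_nat l\<rceil> = (if b = 0 then 0 else (b - 1) div l + 1)"
proof (cases "b = 0")
  case True then show ?thesis by simp
next
  case False
  define D where "D = (b - 1) div l"
  have lp: "(0::rat) < of_nat l" using l by simp
  have d1: "D * l \<le> b - 1" by (simp add: D_def div_times_less_eq_dividend)
  have d2: "b - 1 < D * l + l"
  proof -
    have "b - 1 = D * l + (b - 1) mod l" by (simp add: D_def)
    moreover have "(b - 1) mod l < l" using l by simp
    ultimately show ?thesis by linarith
  qed
  have "\<lceil>(of_nat b :: rat) / of_nat l\<rceil> = int D + 1"
  proof (subst ceiling_eq_iff, intro conjI)
    have "D * l < b" using d1 False by linarith
    then have "(of_nat D :: rat) * of_nat l < of_nat b" by (metis of_nat_less_iff of_nat_mult)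
    then show "of_int (int D + 1) - 1 < (of_nat b :: rat) / of_nat l"
      using lp by (simp add: less_divide_eq)
    have "b \<le> D * l + l" using d2 False by linarith
    then have "(of_nat b :: rat) \<le> of_nat (D * l + l)" by (simp only: of_nat_le_iff)
    also have "(of_nat (D * l + l) :: rat) = (of_nat D + 1) * of_nat l" by (simp add: algebra_simps)
    finally have "(of_nat b :: rat) \<le> (of_nat D + 1) * of_nat l" .
    then show "(of_nat b :: rat) / of_nat l \<le> of_int (int D + 1)"
      using lp by (simp add: divide_le_eq)
  qed
  then show ?thesis using False by (simp add: D_def)
qed

lemma nat_floor_divide: "nat \<lfloor>(of_nat (a + 1) :: rat) / of_nat l\<rfloor> = (a + 1) div l"
  by (simp only: floor_divide_of_nat_eq nat_int)

lemma mset_map_upt: "mset (map f [1..<n + 1]) = image_mset f (mset_set {1..n})"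
proof -
  have "{1..<n + 1} = {1..n}" by auto
  then have "mset [1..<n + 1] = mset_set {1..n}" by (simp only: mset_upt)
  then show ?thesis by (simp only: mset_map)
qed

lemma image_mset_mset_set_reindex:
  assumes "\<And>t. t \<in> S \<Longrightarrow> f (\<sigma> t) = g t" "inj_on \<sigma> S" "\<sigma> ` S = T" and finS: "finite S"
  shows "image_mset f (mset_set T) = image_mset g (mset_set S)"
proof -
  have "mset_set T = image_mset \<sigma> (mset_set S)" using assms(2,3) by (simp add: image_mset_mset_set)
  then have "image_mset f (mset_set T) = image_mset (f \<circ> \<sigma>) (mset_set S)"
    by (simp add: image_mset.compositionality)
  also have "\<dots> = image_mset g (mset_set S)"
    by (rule image_mset_cong) (use assms(1) finS in auto)
  finally show ?thesis .
qed

context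
  fixes l :: nat and h :: rat and H :: "nat \<Rightarrow> rat"
  assumes l: "1 \<le> l"
begin

text \<open>In \<open>Eig(\<mu>, i)\<close> only the positions \<open>j \<equiv> b\<^sub>i (mod l)\<close> count; those below \<open>b\<^sub>i + 1\<close>
  lie on the leg, those above on the arm of the hook.\<close>
definition leg_steps :: "nat \<Rightarrow> nat set" where
  "leg_steps b = (if b = 0 then {} else {0..(b - 1) div l})"

lemma residue_position_on_leg_or_arm:
  assumes j: "1 \<le> j" "j \<le> int a + int b + 1" "j mod int l = int b mod int l"
  shows "(\<exists>t\<in>leg_steps b. j = int b - int l * int t) \<or> (\<exists>t\<in>{1..(a + 1) div l}. j = int b + int l * int t)"
proof -
  have "int l dvd int b - j" using j(3) mod_eq_dvd_iff[of "int b" "int l" j] by simp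
  then obtain k where k: "int b - j = int l * k" by (auto simp: dvd_def)
  have lp: "0 < int l" using l by simp
  show ?thesis
  proof (cases "j \<le> int b")
    case True
    have "0 \<le> int l * k" using k True by simp
    then have k0: "0 \<le> k" using lp by (simp add: zero_le_mult_iff)
    have b1: "b \<noteq> 0" using True j by simp
    have "int (l * nat k) \<le> int (b - 1)" using k k0 j(1) b1 by (simp add: of_nat_diff)
    then have "nat k * l \<le> b - 1" by (simp only: of_nat_le_iff mult.commute)
    then have "nat k \<in> leg_steps b" using l b1 by (simp add: less_eq_div_iff_mult_less_eq leg_steps_def)
    moreover have "j = int b - int l * int (nat k)" using k k0 by simp
    ultimately show ?thesis by blast
  next
    case False
    have "int l * k < 0" using k False by simp
    then have k0: "k < 0" using lp by (simp add: mult_less_0_iff)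
    have "int (l * nat (- k)) \<le> int (a + 1)" using k k0 j(2) by simp
    then have "nat (- k) * l \<le> a + 1" by (simp only: of_nat_le_iff mult.commute)
    then have "nat (- k) \<in> {1..(a + 1) div l}" using l k0 by (simp add: less_eq_div_iff_mult_less_eq)
    moreover have "j = int b + int l * int (nat (- k))" using k k0 by simp
    ultimately show ?thesis by blast
  qed
qed

lemma residue_positions_eq_leg_arm:
  "{j\<in>{1..int a + int b + 1}. j mod int l = int b mod int l}
     = (\<lambda>t. int b - int l * int t) ` leg_steps b \<union> (\<lambda>t. int b + int l * int t) ` {1..(a + 1) div l}"
proof (intro set_eqI iffI)
  fix j assume "j \<in> {j\<in>{1..int a + int b + 1}. j mod int l = int b mod int l}"
  then show "j \<in> (\<lambda>t. int b - int l * int t) ` leg_steps b \<union> (\<lambda>t. int b + int l * int t) ` {1..(a + 1) div l}"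
    using residue_position_on_leg_or_arm[of j a b] by auto
next
  fix j
  assume "j \<in> (\<lambda>t. int b - int l * int t) ` leg_steps b \<union> (\<lambda>t. int b + int l * int t) ` {1..(a + 1) div l}"
  then consider t where "t \<in> leg_steps b" "j = int b - int l * int t"
    | t where "t \<in> {1..(a + 1) div l}" "j = int b + int l * int t"
    by blast
  then show "j \<in> {j\<in>{1..int a + int b + 1}. j mod int l = int b mod int l}"
  proof cases
    case 1
    then have b1: "b \<noteq> 0" and "t \<le> (b - 1) div l" by (simp_all add: leg_steps_def split: if_splits)
    then have "t * l \<le> b - 1" using l by (simp add: less_eq_div_iff_mult_less_eq)
    then have "int l * int t \<le> int b - 1" using b1 by (simp add: of_nat_diff mult.commute flip: of_nat_mult)
    moreover have "- (int l * int t) \<le> int a + 1" by (simp add: order_trans[of _ 0])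
    ultimately show ?thesis using 1(2) by (simp add: mod_diff_mult_self)
  next
    case 2
    then have "t * l \<le> a + 1" "1 \<le> l * t" using l by (simp_all add: less_eq_div_iff_mult_less_eq Suc_le_eq)
    then have "int l * int t \<le> int a + 1" "1 \<le> int l * int t"
      by (simp_all add: mult.commute flip: of_nat_mult)
    then show ?thesis using 2(2) by simp
  qed
qed

lemma image_alpha_arm:
  "image_mset (alpha l h H (int b + 1) (int a + int b + 1) \<circ> (\<lambda>t. int b + int l * int t))
     (mset_set {1..(a + 1) div l})
   = mset (map (\<lambda>j. ee'' l h H (a mod l) + (of_nat j - 1) * h)
       [1..<nat \<lfloor>(of_nat (a + 1) :: rat) / of_nat l\<rfloor> + 1])"
proof -
  define A where "A = (a + 1) div l"
  have "image_mset (\<lambda>j. ee'' l h H (a mod l) + (of_nat j - 1) * h) (mset_set {1..A})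
      = image_mset (alpha l h H (int b + 1) (int a + int b + 1) \<circ> (\<lambda>t. int b + int l * int t))
          (mset_set {1..A})"
  proof (rule image_mset_mset_set_reindex[where \<sigma>="\<lambda>t. A + 1 - t"])
    fix t assume t: "t \<in> {1..A}"
    then have "(of_nat (A + 1 - t) :: rat) - 1 = of_nat (A - t)" by (simp add: of_nat_diff)
    then show "ee'' l h H (a mod l) + (of_nat (A + 1 - t) - 1) * h
        = (alpha l h H (int b + 1) (int a + int b + 1) \<circ> (\<lambda>t. int b + int l * int t)) t"
      using alpha_arm_value[OF l, where t=t and a=a and b=b] t by (simp add: A_def)
  next
    show "(\<lambda>t. A + 1 - t) ` {1..A} = {1..A}"
    proof (intro set_eqI iffI)
      fix x assume "x \<in> {1..A}"
      then show "x \<in> (\<lambda>t. A + 1 - t) ` {1..A}" by (intro image_eqI[of _ _ "A + 1 - x"]) auto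
    qed auto
  qed (auto simp: inj_on_def)
  then show ?thesis by (simp only: nat_floor_divide mset_map_upt A_def)
qed

lemma image_alpha_leg:
  "image_mset (alpha l h H (int b + 1) (int a + int b + 1) \<circ> (\<lambda>t. int b - int l * int t))
     (mset_set (leg_steps b))
   = mset (map (\<lambda>j. ee' h H (b mod l) - (of_nat j - 1) * h)
       [1..<nat \<lceil>(of_nat b :: rat) / of_nat l\<rceil> + 1])"
proof (cases "b = 0")
  case True
  then show ?thesis by (simp add: leg_steps_def nat_ceiling_divide[OF l])
next
  case False
  define D where "D = (b - 1) div l"
  have LD: "leg_steps b = {0..D}" using False by (simp add: leg_steps_def D_def)
  have "image_mset (\<lambda>j. ee' h H (b mod l) - (of_nat j - 1) * h) (mset_set {1..D + 1})
      = image_mset (alpha l h H (int b + 1) (int a + int b + 1) \<circ> (\<lambda>t. int b - int l * int t))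
          (mset_set {0..D})"
  proof (rule image_mset_mset_set_reindex[where \<sigma>="\<lambda>t. D + 1 - t"])
    fix t assume t: "t \<in> {0..D}"
    then have "(of_nat (D + 1 - t) :: rat) - 1 = of_nat (D - t)" by (simp add: of_nat_diff)
    then show "ee' h H (b mod l) - (of_nat (D + 1 - t) - 1) * h
        = (alpha l h H (int b + 1) (int a + int b + 1) \<circ> (\<lambda>t. int b - int l * int t)) t"
      using alpha_leg_value[OF l, where b=b and t=t and a=a] t False by (simp add: D_def)
  next
    show "(\<lambda>t. D + 1 - t) ` {0..D} = {1..D + 1}"
    proof (intro set_eqI iffI)
      fix x assume "x \<in> {1..D + 1}"
      then show "x \<in> (\<lambda>t. D + 1 - t) ` {0..D}" by (intro image_eqI[of _ _ "D + 1 - x"]) auto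
    qed auto
  qed (auto simp: inj_on_def)
  then show ?thesis
    using False by (simp only: LD nat_ceiling_divide[OF l] mset_map_upt D_def if_False)
qed

lemma Eig_i_eq_XiA_plus_XiL: "Eig_i l h H \<mu> i = XiA l h H \<mu> i + XiL l h H \<mu> i"
proof -
  define a where "a = frob_a \<mu> i"
  define b where "b = frob_b \<mu> i"
  let ?\<alpha> = "alpha l h H (int b + 1) (int a + int b + 1)"
  let ?gL = "\<lambda>t::nat. int b - int l * int t"
  let ?gA = "\<lambda>t::nat. int b + int l * int t"
  have lp: "0 < int l" using l by simp
  have "mset [1..int a + int b + 1] = mset_set {1..int a + int b + 1}"
    using mset_set_set[OF distinct_upto[of 1 "int a + int b + 1"]] by simp
  then have "Eig_i l h H \<mu> i
      = image_mset ?\<alpha> (mset_set {j\<in>{1..int a + int b + 1}. j mod int l = int b mod int l})"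
    by (simp add: Eig_i_def Let_def a_def b_def mset_filter filter_mset_mset_set)
  also have "\<dots> = image_mset ?\<alpha> (mset_set (?gL ` leg_steps b \<union> ?gA ` {1..(a + 1) div l}))"
    by (simp only: residue_positions_eq_leg_arm)
  also have "\<dots> = image_mset (?\<alpha> \<circ> ?gL) (mset_set (leg_steps b))
      + image_mset (?\<alpha> \<circ> ?gA) (mset_set {1..(a + 1) div l})"
  proof -
    have "?gL t \<noteq> ?gA s" if "1 \<le> s" for t s
    proof
      assume "?gL t = ?gA s"
      then have "int l * (int t + int s) = 0" by (simp add: algebra_simps)
      then show False using lp that by simp
    qed
    then have "?gL ` leg_steps b \<inter> ?gA ` {1..(a + 1) div l} = {}" by fastforce
    moreover have "inj_on ?gL (leg_steps b)" "inj_on ?gA {1..(a + 1) div l}"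
      using lp by (auto simp: inj_on_def)
    ultimately show ?thesis
      by (simp add: mset_set_Union leg_steps_def image_mset_mset_set[symmetric]
          image_mset.compositionality)
  qed
  also have "\<dots> = XiA l h H \<mu> i + XiL l h H \<mu> i"
    unfolding image_alpha_leg image_alpha_arm XiA_def XiL_def a_def b_def
    by (simp add: add.commute)
  finally show ?thesis .
qed

end

section \<open>The summands \<open>\<Xi>\<close> as images of integer intervals\<close>

lemma typeA_less: "1 \<le> l \<Longrightarrow> typeA l \<mu> i < l"
  unfolding typeA_def by (simp add: nat_less_iff)

lemma typeL_less: "1 \<le> l \<Longrightarrow> typeL l \<mu> i < l"
  unfolding typeL_def by simp

lemma Suc_frob_a_mod_typeA:
  assumes l: "1 \<le> l"
  shows "int ((frob_a \<mu> i + 1) mod l) = (- int (typeA l \<mu> i)) mod int l"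
proof -
  have "0 \<le> (- (int (frob_a \<mu> i) + 1)) mod int l" using l by simp
  then have "int (typeA l \<mu> i) = (- (int (frob_a \<mu> i) + 1)) mod int l" unfolding typeA_def by simp
  then have "(- int (typeA l \<mu> i)) mod int l = (- ((- (int (frob_a \<mu> i) + 1)) mod int l)) mod int l"
    by simp
  also have "\<dots> = (- (- (int (frob_a \<mu> i) + 1))) mod int l" by (simp add: mod_minus_eq)
  finally show ?thesis by (simp add: of_nat_mod)
qed

lemma ee''_frob_a_mod:
  assumes l: "1 \<le> l"
  shows "ee'' l h H (frob_a \<mu> i mod l) = (if typeA l \<mu> i = 0 then 0 else h + ee H (typeA l \<mu> i))"
proof -
  let ?j = "typeA l \<mu> i"
  have m: "int ((frob_a \<mu> i + 1) mod l) = (- int ?j) mod int l" by (rule Suc_frob_a_mod_typeA[OF l])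
  have "?j < l" by (rule typeA_less[OF l])
  then have "(frob_a \<mu> i + 1) mod l = (if ?j = 0 then 0 else l - ?j)"
    using m by (auto simp: zmod_zminus1_eq_if of_nat_diff)
  then show ?thesis using ee''_mod_eq[OF l, of h H "frob_a \<mu> i"] \<open>?j < l\<close> by simp
qed

definition arm_count :: "nat \<Rightarrow> nat list \<Rightarrow> nat \<Rightarrow> nat" where
  "arm_count l \<mu> i = (frob_a \<mu> i + 1) div l"

definition leg_count :: "nat \<Rightarrow> nat list \<Rightarrow> nat \<Rightarrow> nat" where
  "leg_count l \<mu> i = nat \<lceil>(of_nat (frob_b \<mu> i) :: rat) / of_nat l\<rceil>"

text \<open>The exponents of \<open>\<Xi>\<^sub>\<mu>(A, i)\<close> and \<open>\<Xi>\<^sub>\<mu>(L, i)\<close> are \<open>e\<^sub>j + h c\<close>, \<open>j\<close> the type, with \<open>c\<close> running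
  through these intervals; for \<open>j = 0\<close> they are shifted down by one because
  \<open>e\<^sub>0'' = 0 = e\<^sub>0 + 0 h\<close> whereas \<open>e\<^sub>0' = -h = e\<^sub>0 - h\<close>.\<close>
definition arm_interval :: "nat \<Rightarrow> nat list \<Rightarrow> nat \<Rightarrow> int set" where
  "arm_interval l \<mu> i =
     (if typeA l \<mu> i = 0 then {0..int (arm_count l \<mu> i) - 1} else {1..int (arm_count l \<mu> i)})"

definition leg_interval :: "nat \<Rightarrow> nat list \<Rightarrow> nat \<Rightarrow> int set" where
  "leg_interval l \<mu> i =
     (if typeL l \<mu> i = 0 then {- int (leg_count l \<mu> i)..-1} else {1 - int (leg_count l \<mu> i)..0})"

lemma card_arm_interval: "card (arm_interval l \<mu> i) = arm_count l \<mu> i"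
  by (simp add: arm_interval_def)

lemma card_leg_interval: "card (leg_interval l \<mu> i) = leg_count l \<mu> i"
  by (simp add: leg_interval_def)

lemma XiA_eq_image_arm_interval:
  assumes l: "1 \<le> l"
  shows "XiA l h H \<mu> i
    = image_mset (\<lambda>c. ee H (typeA l \<mu> i) + h * of_int c) (mset_set (arm_interval l \<mu> i))"
proof -
  let ?A = "arm_count l \<mu> i"
  have X: "XiA l h H \<mu> i
      = image_mset (\<lambda>k. ee'' l h H (frob_a \<mu> i mod l) + (of_nat k - 1) * h) (mset_set {1..?A})"
    unfolding XiA_def arm_count_def by (simp only: nat_floor_divide mset_map_upt)
  show ?thesis
  proof (cases "typeA l \<mu> i = 0")
    case True
    have "image_mset (\<lambda>c. ee H (typeA l \<mu> i) + h * of_int c) (mset_set {0..int ?A - 1})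
        = image_mset (\<lambda>k. ee'' l h H (frob_a \<mu> i mod l) + (of_nat k - 1) * h) (mset_set {1..?A})"
    proof (rule image_mset_mset_set_reindex[where \<sigma>="\<lambda>k. int k - 1"])
      show "(\<lambda>k. int k - 1) ` {1..?A} = {0..int ?A - 1}"
      proof (intro set_eqI iffI)
        fix c assume "c \<in> {0..int ?A - 1}"
        then show "c \<in> (\<lambda>k. int k - 1) ` {1..?A}" by (intro image_eqI[of _ _ "nat (c + 1)"]) auto
      qed auto
    qed (use True ee''_frob_a_mod[OF l] in \<open>auto simp: ee_def algebra_simps inj_on_def\<close>)
    then show ?thesis using X True by (simp add: arm_interval_def)
  next
    case False
    have "image_mset (\<lambda>c. ee H (typeA l \<mu> i) + h * of_int c) (mset_set {1..int ?A})
        = image_mset (\<lambda>k. ee'' l h H (frob_a \<mu> i mod l) + (of_nat k - 1) * h) (mset_set {1..?A})"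
    proof (rule image_mset_mset_set_reindex[where \<sigma>="\<lambda>k. int k"])
      show "int ` {1..?A} = {1..int ?A}"
      proof (intro set_eqI iffI)
        fix c assume "c \<in> {1..int ?A}"
        then show "c \<in> int ` {1..?A}" by (intro image_eqI[of _ _ "nat c"]) auto
      qed auto
    qed (use False ee''_frob_a_mod[OF l] in \<open>auto simp: algebra_simps\<close>)
    then show ?thesis using X False by (simp add: arm_interval_def)
  qed
qed

lemma XiL_eq_image_leg_interval:
  "XiL l h H \<mu> i
    = image_mset (\<lambda>c. ee H (typeL l \<mu> i) + h * of_int c) (mset_set (leg_interval l \<mu> i))"
proof -
  let ?L = "leg_count l \<mu> i"
  let ?j = "typeL l \<mu> i"
  have X: "XiL l h H \<mu> i = image_mset (\<lambda>k. ee' h H ?j - (of_nat k - 1) * h) (mset_set {1..?L})"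
    unfolding XiL_def leg_count_def typeL_def by (simp only: mset_map_upt)
  show ?thesis
  proof (cases "?j = 0")
    case True
    have "image_mset (\<lambda>c. ee H ?j + h * of_int c) (mset_set {- int ?L..-1})
        = image_mset (\<lambda>k. ee' h H ?j - (of_nat k - 1) * h) (mset_set {1..?L})"
    proof (rule image_mset_mset_set_reindex[where \<sigma>="\<lambda>k. - int k"])
      show "(\<lambda>k. - int k) ` {1..?L} = {- int ?L..-1}"
      proof (intro set_eqI iffI)
        fix c assume "c \<in> {- int ?L..-1}"
        then show "c \<in> (\<lambda>k. - int k) ` {1..?L}" by (intro image_eqI[of _ _ "nat (- c)"]) auto
      qed auto
    qed (use True in \<open>auto simp: ee_def ee'_def algebra_simps inj_on_def\<close>)
    then show ?thesis using X True by (simp add: leg_interval_def)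
  next
    case False
    have "image_mset (\<lambda>c. ee H ?j + h * of_int c) (mset_set {1 - int ?L..0})
        = image_mset (\<lambda>k. ee' h H ?j - (of_nat k - 1) * h) (mset_set {1..?L})"
    proof (rule image_mset_mset_set_reindex[where \<sigma>="\<lambda>k. 1 - int k"])
      show "(\<lambda>k. 1 - int k) ` {1..?L} = {1 - int ?L..0}"
      proof (intro set_eqI iffI)
        fix c assume "c \<in> {1 - int ?L..0}"
        then show "c \<in> (\<lambda>k. 1 - int k) ` {1..?L}" by (intro image_eqI[of _ _ "nat (1 - c)"]) auto
      qed auto
    qed (use False in \<open>auto simp: ee'_def algebra_simps inj_on_def\<close>)
    then show ?thesis using X False by (simp add: leg_interval_def)
  qed
qed

section \<open>One partition for each type\<close>

definition typeA_indices :: "nat \<Rightarrow> nat list \<Rightarrow> nat \<Rightarrow> nat set" where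
  "typeA_indices l \<mu> j = {i\<in>{1..durfee \<mu>}. typeA l \<mu> i = j}"

definition typeL_indices :: "nat \<Rightarrow> nat list \<Rightarrow> nat \<Rightarrow> nat set" where
  "typeL_indices l \<mu> j = {i\<in>{1..durfee \<mu>}. typeL l \<mu> i = j}"

definition type_contents :: "nat \<Rightarrow> nat list \<Rightarrow> nat \<Rightarrow> int multiset" where
  "type_contents l \<mu> j = (\<Sum>i\<in>typeA_indices l \<mu> j. mset_set (arm_interval l \<mu> i))
                         + (\<Sum>i\<in>typeL_indices l \<mu> j. mset_set (leg_interval l \<mu> i))"

lemma inj_on_diff_1:
  fixes f :: "'a \<Rightarrow> nat"
  assumes "inj_on f S" "\<And>x. x \<in> S \<Longrightarrow> 1 \<le> f x"
  shows "inj_on (\<lambda>x. f x - 1) S"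
  using assms by (auto simp: inj_on_def) (metis Suc_pred' One_nat_def less_eq_Suc_le)

lemma sum_const_eq_if_card_eq:
  fixes c :: "'b::comm_monoid_add"
  assumes "finite A" "finite B" "card A = card B"
  shows "(\<Sum>i\<in>A. c) = (\<Sum>i\<in>B. c)"
proof -
  obtain f where "bij_betw f A B" using finite_same_card_bij[OF assms] by blast
  then show ?thesis using sum.reindex_bij_betw[of f A B "\<lambda>_. c"] by simp
qed

lemma Xi_sum_eq_image_type_contents:
  assumes l: "1 \<le> l"
  shows "(\<Sum>i\<in>typeA_indices l \<mu> j. XiA l h H \<mu> i) + (\<Sum>i\<in>typeL_indices l \<mu> j. XiL l h H \<mu> i)
       = image_mset (\<lambda>c. ee H j + h * of_int c) (type_contents l \<mu> j)"
proof -
  have "(\<Sum>i\<in>typeA_indices l \<mu> j. XiA l h H \<mu> i)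
      = (\<Sum>i\<in>typeA_indices l \<mu> j. image_mset (\<lambda>c. ee H j + h * of_int c) (mset_set (arm_interval l \<mu> i)))"
    by (rule sum.cong) (simp_all add: XiA_eq_image_arm_interval[OF l] typeA_indices_def)
  moreover have "(\<Sum>i\<in>typeL_indices l \<mu> j. XiL l h H \<mu> i)
      = (\<Sum>i\<in>typeL_indices l \<mu> j. image_mset (\<lambda>c. ee H j + h * of_int c) (mset_set (leg_interval l \<mu> i)))"
    by (rule sum.cong) (simp_all add: XiL_eq_image_leg_interval typeL_indices_def)
  ultimately show ?thesis
    by (simp add: type_contents_def image_mset_sum typeA_indices_def typeL_indices_def)
qed

lemma ceiling_divide_of_nat_eq:
  "\<lceil>(of_nat b :: rat) / of_nat l\<rceil> = - ((- int b) div int l)"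
proof -
  have "\<lceil>(of_nat b :: rat) / of_nat l\<rceil> = - \<lfloor>- ((of_nat b :: rat) / of_nat l)\<rfloor>" by (rule ceiling_def)
  also have "- ((of_nat b :: rat) / of_nat l) = of_int (- int b) / of_int (int l)" by simp
  also have "\<lfloor>(of_int (- int b) :: rat) / of_int (int l)\<rfloor> = (- int b) div int l"
    by (rule floor_divide_of_int_eq)
  finally show ?thesis .
qed

lemma arm_count_eq:
  assumes l: "1 \<le> l"
  shows "int l * int (arm_count l \<mu> i) = int (frob_a \<mu> i + 1) - (- int (typeA l \<mu> i)) mod int l"
proof -
  have "int (frob_a \<mu> i + 1) = int l * int (arm_count l \<mu> i) + int ((frob_a \<mu> i + 1) mod l)"
    unfolding arm_count_def by (simp flip: of_nat_mult of_nat_add)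
  then show ?thesis using Suc_frob_a_mod_typeA[OF l] by simp
qed

lemma leg_count_eq:
  assumes l: "1 \<le> l"
  shows "int l * int (leg_count l \<mu> i) = int (frob_b \<mu> i) + (- int (typeL l \<mu> i)) mod int l"
proof -
  let ?b = "int (frob_b \<mu> i)"
  have "0 \<le> - ((- ?b) div int l)" using l by (simp add: div_nonpos_pos_le0)
  then have "int (leg_count l \<mu> i) = - ((- ?b) div int l)"
    unfolding leg_count_def ceiling_divide_of_nat_eq by simp
  then have "int l * int (leg_count l \<mu> i) = - (int l * ((- ?b) div int l))" by simp
  also have "int l * ((- ?b) div int l) = (- ?b) - (- ?b) mod int l"
    by (simp add: minus_mod_eq_mult_div)
  also have "(- ?b) mod int l = (- int (typeL l \<mu> i)) mod int l"
    unfolding typeL_def by (simp add: of_nat_mod mod_minus_eq)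
  finally show ?thesis by simp
qed

context
  fixes l :: nat and \<mu> :: "nat list"
  assumes l: "1 \<le> l" and mu: "is_partition \<mu>" and ec: "empty_core l \<mu>"
begin

lemma inj_on_arm_count: "inj_on (arm_count l \<mu>) (typeA_indices l \<mu> j)"
proof (rule inj_onI)
  fix i i' assume i: "i \<in> typeA_indices l \<mu> j" "i' \<in> typeA_indices l \<mu> j"
    and e: "arm_count l \<mu> i = arm_count l \<mu> i'"
  then have "frob_a \<mu> i = frob_a \<mu> i'"
    using arm_count_eq[OF l, of \<mu> i] arm_count_eq[OF l, of \<mu> i'] by (simp add: typeA_indices_def)
  then show "i = i'" using inj_on_frob_a[OF mu] i by (auto simp: typeA_indices_def dest: inj_onD)
qed

lemma inj_on_leg_count: "inj_on (leg_count l \<mu>) (typeL_indices l \<mu> j)"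
proof (rule inj_onI)
  fix i i' assume i: "i \<in> typeL_indices l \<mu> j" "i' \<in> typeL_indices l \<mu> j"
    and e: "leg_count l \<mu> i = leg_count l \<mu> i'"
  then have "frob_b \<mu> i = frob_b \<mu> i'"
    using leg_count_eq[OF l, of \<mu> i] leg_count_eq[OF l, of \<mu> i'] by (simp add: typeL_indices_def)
  then show "i = i'" using inj_on_frob_b[OF mu] i by (auto simp: typeL_indices_def dest: inj_onD)
qed

lemma card_typeA_indices_eq: "j < l \<Longrightarrow> card (typeA_indices l \<mu> j) = card (typeL_indices l \<mu> j)"
  unfolding typeA_indices_def typeL_indices_def by (rule card_typeA_eq_card_typeL[OF l mu ec])

lemma arm_count_pos_type0:
  assumes "i \<in> typeA_indices l \<mu> 0"
  shows "1 \<le> arm_count l \<mu> i"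
proof -
  have "int l * int (arm_count l \<mu> i) = int (frob_a \<mu> i + 1)"
    using arm_count_eq[OF l, of \<mu> i] assms by (simp add: typeA_indices_def)
  then have "0 < int l * int (arm_count l \<mu> i)" by simp
  then show ?thesis by (simp add: zero_less_mult_iff)
qed

lemma leg_count_pos:
  assumes "i \<in> typeL_indices l \<mu> j" "j \<noteq> 0"
  shows "1 \<le> leg_count l \<mu> i"
proof -
  have "1 \<le> frob_b \<mu> i" using assms by (cases "frob_b \<mu> i") (auto simp: typeL_indices_def typeL_def)
  moreover have "0 \<le> (- int (typeL l \<mu> i)) mod int l" using l by simp
  ultimately have "0 < int l * int (leg_count l \<mu> i)" using leg_count_eq[OF l, of \<mu> i] by simp
  then show ?thesis by (simp add: zero_less_mult_iff)
qed

lemma type_contents_0_eq_hooks: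
  "type_contents l \<mu> 0
     = (\<Sum>\<alpha>\<in>(\<lambda>i. arm_count l \<mu> i - 1) ` typeA_indices l \<mu> 0. mset_set {0..int \<alpha>})
       + (\<Sum>\<beta>\<in>leg_count l \<mu> ` typeL_indices l \<mu> 0. mset_set {- int \<beta>..-1})"
proof -
  have "inj_on (\<lambda>i. arm_count l \<mu> i - 1) (typeA_indices l \<mu> 0)"
    using inj_on_arm_count arm_count_pos_type0 by (rule inj_on_diff_1)
  then have "(\<Sum>\<alpha>\<in>(\<lambda>i. arm_count l \<mu> i - 1) ` typeA_indices l \<mu> 0. mset_set {0..int \<alpha>})
      = (\<Sum>i\<in>typeA_indices l \<mu> 0. mset_set (arm_interval l \<mu> i))"
    by (rule sum.reindex_cong[OF _ refl])
       (use arm_count_pos_type0 in \<open>auto simp: arm_interval_def typeA_indices_def of_nat_diff\<close>)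
  moreover have "(\<Sum>\<beta>\<in>leg_count l \<mu> ` typeL_indices l \<mu> 0. mset_set {- int \<beta>..-1})
      = (\<Sum>i\<in>typeL_indices l \<mu> 0. mset_set (leg_interval l \<mu> i))"
    by (rule sum.reindex_cong[OF inj_on_leg_count refl])
       (simp add: leg_interval_def typeL_indices_def)
  ultimately show ?thesis by (simp add: type_contents_def)
qed

lemma sum_leg_intervals_eq_hooks:
  assumes j: "j \<noteq> 0"
  shows "(\<Sum>i\<in>typeL_indices l \<mu> j. mset_set (leg_interval l \<mu> i))
     = (\<Sum>i\<in>typeL_indices l \<mu> j. {#0#})
       + (\<Sum>\<beta>\<in>(\<lambda>i. leg_count l \<mu> i - 1) ` typeL_indices l \<mu> j. mset_set {- int \<beta>..-1})"
proof -
  let ?IL = "typeL_indices l \<mu> j"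
  have "inj_on (\<lambda>i. leg_count l \<mu> i - 1) ?IL"
    using leg_count_pos j by (intro inj_on_diff_1[OF inj_on_leg_count])
  then have leg_hooks: "(\<Sum>\<beta>\<in>(\<lambda>i. leg_count l \<mu> i - 1) ` ?IL. mset_set {- int \<beta>..-1})
      = (\<Sum>i\<in>?IL. mset_set {1 - int (leg_count l \<mu> i)..-1})"
    by (rule sum.reindex_cong[OF _ refl]) (use leg_count_pos j in \<open>auto simp: of_nat_diff\<close>)
  have "(\<Sum>i\<in>?IL. mset_set (leg_interval l \<mu> i))
      = (\<Sum>i\<in>?IL. {#0#} + mset_set {1 - int (leg_count l \<mu> i)..-1})"
  proof (rule sum.cong)
    fix i assume "i \<in> ?IL"
    then have "{1 - int (leg_count l \<mu> i)..0} = insert 0 {1 - int (leg_count l \<mu> i)..-1}"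
      "typeL l \<mu> i = j" using leg_count_pos j by (auto simp: typeL_indices_def)
    then show "mset_set (leg_interval l \<mu> i) = {#0#} + mset_set {1 - int (leg_count l \<mu> i)..-1}"
      using j by (simp add: leg_interval_def)
  qed simp
  also have "\<dots> = (\<Sum>i\<in>?IL. {#0#}) + (\<Sum>i\<in>?IL. mset_set {1 - int (leg_count l \<mu> i)..-1})"
    by (rule sum.distrib)
  finally show "(\<Sum>i\<in>?IL. mset_set (leg_interval l \<mu> i))
      = (\<Sum>i\<in>?IL. {#0#}) + (\<Sum>\<beta>\<in>(\<lambda>i. leg_count l \<mu> i - 1) ` ?IL. mset_set {- int \<beta>..-1})"
    unfolding leg_hooks .
qed

text \<open>For type \<open>j \<noteq> 0\<close> the intervals \<open>[1..A\<^sub>i]\<close> and \<open>[1 - L\<^sub>i..0]\<close> are not halves of hooks,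
  but there are as many arm as leg intervals, so moving the content \<open>0\<close> from each leg to
  an arm interval gives hooks.\<close>
lemma type_contents_eq_hooks:
  assumes j: "j < l" "j \<noteq> 0"
  shows "type_contents l \<mu> j
     = (\<Sum>\<alpha>\<in>arm_count l \<mu> ` typeA_indices l \<mu> j. mset_set {0..int \<alpha>})
       + (\<Sum>\<beta>\<in>(\<lambda>i. leg_count l \<mu> i - 1) ` typeL_indices l \<mu> j. mset_set {- int \<beta>..-1})"
proof -
  let ?IA = "typeA_indices l \<mu> j" and ?IL = "typeL_indices l \<mu> j"
  have finA: "finite ?IA" and finL: "finite ?IL" by (simp_all add: typeA_indices_def typeL_indices_def)
  have "(\<Sum>\<alpha>\<in>arm_count l \<mu> ` ?IA. mset_set {0..int \<alpha>})
      = (\<Sum>i\<in>?IA. {#0#} + mset_set {1..int (arm_count l \<mu> i)})"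
  proof (rule sum.reindex_cong[OF inj_on_arm_count refl])
    fix i
    have "{0..int (arm_count l \<mu> i)} = insert 0 {1..int (arm_count l \<mu> i)}" by auto
    then show "mset_set {0..int (arm_count l \<mu> i)} = {#0#} + mset_set {1..int (arm_count l \<mu> i)}"
      by simp
  qed
  also have "\<dots> = (\<Sum>i\<in>?IA. {#0#}) + (\<Sum>i\<in>?IA. mset_set {1..int (arm_count l \<mu> i)})"
    by (rule sum.distrib)
  also have "(\<Sum>i\<in>?IA. {#0#}) = (\<Sum>i\<in>?IL. {#0#})"
    using card_typeA_indices_eq[OF j(1)] finA finL by (rule sum_const_eq_if_card_eq[rotated 2])
  also have "(\<Sum>i\<in>?IA. mset_set {1..int (arm_count l \<mu> i)}) = (\<Sum>i\<in>?IA. mset_set (arm_interval l \<mu> i))"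
    using j(2) by (intro sum.cong) (simp_all add: arm_interval_def typeA_indices_def)
  finally have arms: "(\<Sum>\<alpha>\<in>arm_count l \<mu> ` ?IA. mset_set {0..int \<alpha>})
      = (\<Sum>i\<in>?IL. {#0#}) + (\<Sum>i\<in>?IA. mset_set (arm_interval l \<mu> i))" .
  show ?thesis
    unfolding type_contents_def arms sum_leg_intervals_eq_hooks[OF j(2)] by (simp only: add.assoc add.commute add.left_commute)
qed

lemma exists_partition_contents_type_contents:
  assumes j: "j < l"
  shows "\<exists>P. is_partition P \<and> contents P = type_contents l \<mu> j"
proof -
  have finA: "finite (typeA_indices l \<mu> j)" and finL: "finite (typeL_indices l \<mu> j)"
    by (simp_all add: typeA_indices_def typeL_indices_def)
  note cards = card_typeA_indices_eq[OF j]
  show ?thesis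
  proof (cases "j = 0")
    case True
    have "inj_on (\<lambda>i. arm_count l \<mu> i - 1) (typeA_indices l \<mu> 0)"
      using inj_on_arm_count arm_count_pos_type0 by (rule inj_on_diff_1)
    then show ?thesis
      using exists_partition_with_hooks[of "(\<lambda>i. arm_count l \<mu> i - 1) ` typeA_indices l \<mu> 0"
          "leg_count l \<mu> ` typeL_indices l \<mu> 0"] finA finL cards True inj_on_leg_count
      by (auto simp: type_contents_0_eq_hooks card_image)
  next
    case False
    have "inj_on (\<lambda>i. leg_count l \<mu> i - 1) (typeL_indices l \<mu> j)"
      using leg_count_pos False by (intro inj_on_diff_1[OF inj_on_leg_count])
    then show ?thesis
      using exists_partition_with_hooks[of "arm_count l \<mu> ` typeA_indices l \<mu> j"
          "(\<lambda>i. leg_count l \<mu> i - 1) ` typeL_indices l \<mu> j"] finA finL cards inj_on_arm_count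
      by (auto simp: type_contents_eq_hooks[OF j False] card_image)
  qed
qed

end

lemma sum_over_type_classes:
  assumes "finite S" "\<And>x. x \<in> S \<Longrightarrow> t x < (l::nat)"
  shows "(\<Sum>j<l. \<Sum>x\<in>{x\<in>S. t x = j}. f x) = (\<Sum>x\<in>S. f x)"
  by (rule sum.group) (use assms in auto)

lemma sum_Xi_sums_eq_Eig:
  assumes l: "1 \<le> l"
  shows "(\<Sum>j<l. (\<Sum>i\<in>typeA_indices l \<mu> j. XiA l h H \<mu> i) + (\<Sum>i\<in>typeL_indices l \<mu> j. XiL l h H \<mu> i))
       = Eig l h H \<mu>"
proof -
  have "(\<Sum>j<l. \<Sum>i\<in>typeA_indices l \<mu> j. XiA l h H \<mu> i) = (\<Sum>i\<in>{1..durfee \<mu>}. XiA l h H \<mu> i)"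
    unfolding typeA_indices_def by (rule sum_over_type_classes) (simp_all add: typeA_less[OF l])
  moreover have "(\<Sum>j<l. \<Sum>i\<in>typeL_indices l \<mu> j. XiL l h H \<mu> i) = (\<Sum>i\<in>{1..durfee \<mu>}. XiL l h H \<mu> i)"
    unfolding typeL_indices_def by (rule sum_over_type_classes) (simp_all add: typeL_less[OF l])
  ultimately show ?thesis
    unfolding Eig_def Eig_i_eq_XiA_plus_XiL[OF l] by (simp add: sum.distrib)
qed

context
  fixes l :: nat and \<mu> :: "nat list"
  assumes l: "1 \<le> l" and mu: "is_partition \<mu>" and ec: "empty_core l \<mu>"
begin

lemma sum_typeA_eq_sum_typeL:
  fixes g :: "nat \<Rightarrow> 'a::comm_monoid_add"
  shows "(\<Sum>i\<in>{1..durfee \<mu>}. g (typeA l \<mu> i)) = (\<Sum>i\<in>{1..durfee \<mu>}. g (typeL l \<mu> i))"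
proof -
  have "(\<Sum>i\<in>{1..durfee \<mu>}. g (typeA l \<mu> i)) = (\<Sum>j<l. \<Sum>i\<in>typeA_indices l \<mu> j. g j)"
    unfolding typeA_indices_def
    by (subst sum_over_type_classes[symmetric, of _ "typeA l \<mu>" l]) (auto simp: typeA_less[OF l])
  also have "\<dots> = (\<Sum>j<l. \<Sum>i\<in>typeL_indices l \<mu> j. g j)"
  proof (rule sum.cong[OF refl], rule sum_const_eq_if_card_eq)
    fix j assume "j \<in> {..<l}"
    then show "card (typeA_indices l \<mu> j) = card (typeL_indices l \<mu> j)"
      by (simp add: card_typeA_indices_eq[OF l mu ec])
  qed (simp_all add: typeA_indices_def typeL_indices_def)
  also have "\<dots> = (\<Sum>i\<in>{1..durfee \<mu>}. g (typeL l \<mu> i))"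
    unfolding typeL_indices_def
    by (subst sum_over_type_classes[symmetric, of _ "typeL l \<mu>" l]) (auto simp: typeL_less[OF l])
  finally show ?thesis .
qed

lemma psize_eq_sum_hook_lengths: "psize \<mu> = (\<Sum>i\<in>{1..durfee \<mu>}. frob_a \<mu> i + frob_b \<mu> i + 1)"
proof -
  have "psize \<mu> = (\<Sum>i\<in>{1..durfee \<mu>}. size (mset_set {- int (frob_b \<mu> i)..int (frob_a \<mu> i)}))"
    unfolding size_contents[symmetric] contents_eq_sum_hooks[OF mu] by (rule size_multiset_sum)
  also have "\<dots> = (\<Sum>i\<in>{1..durfee \<mu>}. frob_a \<mu> i + frob_b \<mu> i + 1)"
    by (rule sum.cong) (simp_all add: nat_add_distrib)
  finally show ?thesis .
qed

text \<open>\<open>l (A\<^sub>i + L\<^sub>i) = a\<^sub>i + b\<^sub>i + 1\<close> up to the residues of \<open>-typeA\<close> and \<open>-typeL\<close>, which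
  cancel in the sum over all hooks.\<close>
lemma sum_arm_leg_count:
  assumes "psize \<mu> = n * l"
  shows "(\<Sum>i\<in>{1..durfee \<mu>}. arm_count l \<mu> i + leg_count l \<mu> i) = n"
proof -
  let ?I = "{1..durfee \<mu>}"
  let ?\<phi> = "\<lambda>j. (- int j) mod int l"
  define S where "S = (\<Sum>i\<in>?I. arm_count l \<mu> i + leg_count l \<mu> i)"
  have "int l * int S
      = (\<Sum>i\<in>?I. int (frob_a \<mu> i + frob_b \<mu> i + 1) - ?\<phi> (typeA l \<mu> i) + ?\<phi> (typeL l \<mu> i))"
    unfolding S_def of_nat_sum sum_distrib_left
    by (rule sum.cong) (simp_all add: arm_count_eq[OF l] leg_count_eq[OF l] algebra_simps)
  also have "\<dots> = int (psize \<mu>)"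
    using sum_typeA_eq_sum_typeL[of ?\<phi>]
    by (simp add: sum.distrib sum_subtractf psize_eq_sum_hook_lengths del: of_nat_add)
  finally have "int l * int S = int l * int n"
    using assms by simp
  then have "S = n" using l by simp
  then show ?thesis by (simp add: S_def)
qed

lemma exists_multipartition_type_contents:
  assumes "psize \<mu> = n * l"
  shows "\<exists>P. is_multipartition l n P \<and> (\<forall>j<l. contents (P j) = type_contents l \<mu> j)"
proof -
  obtain Q where Q: "\<And>j. j < l \<Longrightarrow> is_partition (Q j) \<and> contents (Q j) = type_contents l \<mu> j"
    using exists_partition_contents_type_contents[OF l mu ec] by metis
  define P where "P j = (if j < l then Q j else [])" for j
  have "(\<Sum>j<l. psize (P j)) = (\<Sum>j<l. size (type_contents l \<mu> j))"
    by (rule sum.cong) (simp_all add: P_def Q size_contents[symmetric])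
  also have "\<dots> = (\<Sum>j<l. \<Sum>i\<in>typeA_indices l \<mu> j. arm_count l \<mu> i)
                 + (\<Sum>j<l. \<Sum>i\<in>typeL_indices l \<mu> j. leg_count l \<mu> i)"
    by (simp add: type_contents_def sum.distrib card_arm_interval card_leg_interval)
  also have "(\<Sum>j<l. \<Sum>i\<in>typeA_indices l \<mu> j. arm_count l \<mu> i) = (\<Sum>i\<in>{1..durfee \<mu>}. arm_count l \<mu> i)"
    unfolding typeA_indices_def by (rule sum_over_type_classes) (simp_all add: typeA_less[OF l])
  also have "(\<Sum>j<l. \<Sum>i\<in>typeL_indices l \<mu> j. leg_count l \<mu> i) = (\<Sum>i\<in>{1..durfee \<mu>}. leg_count l \<mu> i)"
    unfolding typeL_indices_def by (rule sum_over_type_classes) (simp_all add: typeL_less[OF l])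
  also have "(\<Sum>i\<in>{1..durfee \<mu>}. arm_count l \<mu> i) + (\<Sum>i\<in>{1..durfee \<mu>}. leg_count l \<mu> i)
      = (\<Sum>i\<in>{1..durfee \<mu>}. arm_count l \<mu> i + leg_count l \<mu> i)"
    by (rule sum.distrib[symmetric])
  also have "\<dots> = n" by (rule sum_arm_leg_count[OF assms])
  finally show ?thesis
    by (intro exI[of _ P]) (auto simp: is_multipartition_def P_def Q)
qed

end

section \<open>Genericity and uniqueness of the multipartition\<close>

lemma length_le_sum_list: "0 \<notin> set p \<Longrightarrow> length p \<le> sum_list (p::nat list)"
  by (induction p) auto

lemma abs_content_le_psize:
  assumes p: "is_partition p" and c: "c \<in># contents p"
  shows "\<bar>c\<bar> \<le> int (psize p)"
proof -
  obtain i k where ik: "(i, k) \<in> diagram p" "c = int k - int i"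
    using c unfolding contents_def by auto
  have i: "1 \<le> i" "i \<le> length p" "1 \<le> k" "k \<le> part p i" using ik by (auto simp: diagram_def)
  have "length p \<le> psize p" using p length_le_sum_list by (simp add: is_partition_def psize_def)
  moreover have "part p i \<le> psize p"
  proof -
    have "p ! (i - 1) \<in> set p" using i by simp
    then show ?thesis unfolding psize_def part_def using i by (simp add: member_le_sum_list)
  qed
  ultimately show ?thesis using i ik by linarith
qed

lemma ee_split: "j \<le> j' \<Longrightarrow> ee H j' = ee H j + (\<Sum>s\<in>{Suc j..j'}. H s)"
proof -
  assume "j \<le> j'"
  then have "{1..j'} = {1..j} \<union> {Suc j..j'}" by auto
  then show ?thesis unfolding ee_def by (simp add: sum.union_disjoint)
qed

text \<open>The parameter is generic if \<open>h \<noteq> 0\<close> and \<open>e\<^sub>j + d h \<noteq> e\<^sub>j\<^sub>'\<close> for \<open>j < j' < l\<close> and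
  \<open>|d| \<le> 2n\<close>; then the exponents \<open>e\<^sub>j + c h\<close> with \<open>|c| \<le> n\<close> are pairwise distinct.\<close>
definition generic_forms :: "nat \<Rightarrow> nat \<Rightarrow> (rat \<times> rat \<times> (nat \<Rightarrow> rat)) set" where
  "generic_forms l n = insert (0, 1, \<lambda>_. 0)
     ((\<lambda>(j, j', d). (0, of_int d, \<lambda>s. if j < s \<and> s \<le> j' then -1 else 0))
        ` {(j, j', d). j < j' \<and> j' < l \<and> d \<in> {- 2 * int n..2 * int n}})"

lemma finite_generic_forms: "finite (generic_forms l n)"
proof -
  have "{(j, j', d). j < j' \<and> j' < l \<and> d \<in> {- 2 * int n..2 * int n}}
      \<subseteq> {..<l} \<times> {..<l} \<times> {- 2 * int n..2 * int n}" by auto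
  then show ?thesis unfolding generic_forms_def by (auto dest: finite_subset)
qed

lemma proper_generic_forms:
  assumes "f \<in> generic_forms l n"
  shows "proper_form l f"
proof -
  consider "f = (0, 1, \<lambda>_. 0)"
    | j j' d where "j < j'" "j' < l" "f = (0, of_int d, \<lambda>s. if j < s \<and> s \<le> j' then -1 else 0)"
    using assms by (auto simp: generic_forms_def)
  then show ?thesis
  proof cases
    case (2 j j')
    then show ?thesis by (auto simp: proper_form_def intro!: bexI[of _ j'])
  qed (simp add: proper_form_def)
qed

lemma eval_form_separating:
  assumes "j < j'" "j' < l"
  shows "eval_form l (0, of_int d, \<lambda>s. if j < s \<and> s \<le> j' then -1 else 0) h H
       = ee H j + h * of_int d - ee H j'"
proof -
  have "(\<Sum>i=1..l-1. (if j < i \<and> i \<le> j' then -1 else 0) * H i)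
      = (\<Sum>i\<in>{1..l-1} \<inter> {Suc j..j'}. - H i)"
  proof -
    have "(\<Sum>i=1..l-1. (if j < i \<and> i \<le> j' then -1 else 0) * H i)
        = (\<Sum>i\<in>{1..l-1}. if i \<in> {Suc j..j'} then - H i else 0)"
      by (rule sum.cong) auto
    also have "\<dots> = (\<Sum>i\<in>{1..l-1} \<inter> {Suc j..j'}. - H i)"
      by (rule sum.inter_restrict[symmetric]) simp
    finally show ?thesis .
  qed
  also have "{1..l-1} \<inter> {Suc j..j'} = {Suc j..j'}" using assms by auto
  finally show ?thesis
    using ee_split[of j j' H] assms by (simp add: eval_form_def sum_negf algebra_simps)
qed

lemma generic_exponents_distinct:
  assumes gen: "\<forall>f\<in>generic_forms l n. eval_form l f h H \<noteq> 0"
    and j: "j1 < l" "j2 < l" and c: "\<bar>c1\<bar> \<le> int n" "\<bar>c2\<bar> \<le> int n"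
    and eq: "ee H j1 + h * of_int c1 = ee H j2 + h * of_int c2"
  shows "j1 = j2 \<and> c1 = c2"
proof -
  have h0: "h \<noteq> 0" using gen by (simp add: generic_forms_def eval_form_def)
  have ne: "ee H j + h * of_int c \<noteq> ee H j' + h * of_int c'"
    if "j < j'" "j' < l" "\<bar>c\<bar> \<le> int n" "\<bar>c'\<bar> \<le> int n" for j j' c c'
  proof -
    have "(0, of_int (c - c'), \<lambda>s. if j < s \<and> s \<le> j' then -1 else 0) \<in> generic_forms l n"
      unfolding generic_forms_def by (rule insertI2, rule image_eqI[where x="(j, j', c - c')"]) (use that in auto)
    then have "eval_form l (0, of_int (c - c'), \<lambda>s. if j < s \<and> s \<le> j' then -1 else 0) h H \<noteq> 0"
      using gen by blast
    then have ne0: "ee H j + h * of_int (c - c') - ee H j' \<noteq> 0"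
      unfolding eval_form_separating[OF that(1,2)] .
    show ?thesis
    proof
      assume "ee H j + h * of_int c = ee H j' + h * of_int c'"
      then have "ee H j + h * of_int (c - c') - ee H j' = 0" by (simp add: algebra_simps)
      with ne0 show False by contradiction
    qed
  qed
  have "\<not> j1 < j2" "\<not> j2 < j1" using ne[of j1 j2 c1 c2] ne[of j2 j1 c2 c1] j c eq by auto
  then have "j1 = j2" by simp
  then show ?thesis using eq h0 by simp
qed

text \<open>For generic parameters the \<open>k\<close>-th summand is recovered from the sum by keeping the
  exponents \<open>e\<^sub>k + c h\<close> with \<open>|c| \<le> n\<close>, since all contents of a multipartition of \<open>n\<close> are
  bounded by \<open>n\<close>.\<close>
lemma filter_sum_shifted_res:
  assumes gen: "\<forall>f\<in>generic_forms l n. eval_form l f h H \<noteq> 0"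
    and R: "is_multipartition l n R" and k: "k < l"
  shows "filter_mset (\<lambda>x. \<exists>c. \<bar>c\<bar> \<le> int n \<and> x = ee H k + h * of_int c)
           (\<Sum>j<l. shifted_res (ee H j) h (R j))
       = shifted_res (ee H k) h (R k)"
proof -
  let ?V = "\<lambda>j x. \<exists>c. \<bar>c\<bar> \<le> int n \<and> x = ee H j + h * of_int c"
  have V: "?V j x" if j: "j < l" and x: "x \<in># shifted_res (ee H j) h (R j)" for j x
  proof -
    obtain c where c: "c \<in># contents (R j)" "x = ee H j + h * of_int c"
      using x by (auto simp: shifted_res_def)
    have "\<bar>c\<bar> \<le> int (psize (R j))"
      using R j c(1) by (intro abs_content_le_psize) (simp_all add: is_multipartition_def)
    also have "psize (R j) \<le> (\<Sum>j<l. psize (R j))" using j by (intro member_le_sum) auto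
    also have "\<dots> = n" using R by (simp add: is_multipartition_def)
    finally show ?thesis using c(2) by auto
  qed
  have each: "filter_mset (?V k) (shifted_res (ee H j) h (R j))
      = (if j = k then shifted_res (ee H k) h (R k) else {#})" if j: "j < l" for j
  proof (cases "j = k")
    case True
    then show ?thesis using V[OF k] by (simp add: filter_mset_eq_conv)
  next
    case False
    then have "\<not> ?V k x" if "x \<in># shifted_res (ee H j) h (R j)" for x
      using V[OF j that] generic_exponents_distinct[OF gen k j] by fastforce
    then show ?thesis using False by simp
  qed
  have "filter_mset (?V k) (\<Sum>j<l. shifted_res (ee H j) h (R j))
      = (\<Sum>j<l. filter_mset (?V k) (shifted_res (ee H j) h (R j)))"
    by (simp add: filter_mset_sum)
  also have "\<dots> = (\<Sum>j<l. if j = k then shifted_res (ee H k) h (R k) else {#})"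
    by (rule sum.cong) (simp_all add: each)
  finally show ?thesis using k by simp
qed

lemma multipartition_eq_if_sum_shifted_res_eq:
  assumes gen: "\<forall>f\<in>generic_forms l n. eval_form l f h H \<noteq> 0"
    and P: "is_multipartition l n P" and Q: "is_multipartition l n Q"
    and eq: "(\<Sum>j<l. shifted_res (ee H j) h (P j)) = (\<Sum>j<l. shifted_res (ee H j) h (Q j))"
  shows "P = Q"
proof
  fix k
  show "P k = Q k"
  proof (cases "k < l")
    case False
    then show ?thesis using P Q by (simp add: is_multipartition_def)
  next
    case True
    have h0: "h \<noteq> 0" using gen by (simp add: generic_forms_def eval_form_def)
    have "image_mset (\<lambda>c. ee H k + h * of_int c) (contents (P k))
        = image_mset (\<lambda>c. ee H k + h * of_int c) (contents (Q k))"
      using filter_sum_shifted_res[OF gen P True] filter_sum_shifted_res[OF gen Q True] eq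
      by (simp add: shifted_res_def)
    then have "contents (P k) = contents (Q k)"
      by (rule multiset.inj_map_strong[rotated]) (use h0 in simp)
    moreover have "is_partition (P k)" "is_partition (Q k)"
      using P Q True by (auto simp: is_multipartition_def)
    ultimately show ?thesis using contents_inj by blast
  qed
qed

theorem lemma7p2:
  fixes l n :: nat
  assumes "1 \<le> l"
  shows "\<exists>B. finite B \<and> (\<forall>f\<in>B. proper_form l f) \<and>
    (\<forall>h H. (\<forall>f\<in>B. eval_form l f h H \<noteq> 0) \<longrightarrow>
      (\<forall>\<mu>\<in>P_empty l (n * l). \<forall>j<l.
         shifted_res (ee H j) h (EigMP l n h H \<mu> j)
         = (\<Sum>i\<in>{i\<in>{1..durfee \<mu>}. typeA l \<mu> i = j}. XiA l h H \<mu> i)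
           + (\<Sum>i\<in>{i\<in>{1..durfee \<mu>}. typeL l \<mu> i = j}. XiL l h H \<mu> i)))"
proof (intro exI[of _ "generic_forms l n"] conjI allI impI ballI)
  fix h H \<mu> j
  assume gen: "\<forall>f\<in>generic_forms l n. eval_form l f h H \<noteq> 0"
    and "\<mu> \<in> P_empty l (n * l)" and j: "j < l"
  then have mu: "is_partition \<mu>" "empty_core l \<mu>" "psize \<mu> = n * l"
    by (simp_all add: P_empty_def)
  obtain P where P: "is_multipartition l n P" "\<And>j. j < l \<Longrightarrow> contents (P j) = type_contents l \<mu> j"
    using exists_multipartition_type_contents[OF assms mu] by blast
  have P_Xi: "shifted_res (ee H j) h (P j)
      = (\<Sum>i\<in>typeA_indices l \<mu> j. XiA l h H \<mu> i) + (\<Sum>i\<in>typeL_indices l \<mu> j. XiL l h H \<mu> i)"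
    if "j < l" for j
    unfolding shifted_res_def P(2)[OF that] Xi_sum_eq_image_type_contents[OF assms] ..
  have P_Eig: "(\<Sum>j<l. shifted_res (ee H j) h (P j)) = Eig l h H \<mu>"
    using sum_Xi_sums_eq_Eig[OF assms] P_Xi by simp
  have "EigMP l n h H \<mu> = P"
    unfolding EigMP_def
  proof (rule the_equality)
    show "is_multipartition l n P \<and> (\<Sum>j<l. shifted_res (ee H j) h (P j)) = Eig l h H \<mu>"
      using P(1) P_Eig by blast
  next
    fix Q assume "is_multipartition l n Q \<and> (\<Sum>j<l. shifted_res (ee H j) h (Q j)) = Eig l h H \<mu>"
    then show "Q = P"
      using multipartition_eq_if_sum_shifted_res_eq[OF gen _ P(1)] P_Eig by simp
  qed
  then show "shifted_res (ee H j) h (EigMP l n h H \<mu> j)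
      = (\<Sum>i\<in>{i\<in>{1..durfee \<mu>}. typeA l \<mu> i = j}. XiA l h H \<mu> i)
        + (\<Sum>i\<in>{i\<in>{1..durfee \<mu>}. typeL l \<mu> i = j}. XiL l h H \<mu> i)"
    using P_Xi[OF j] unfolding typeA_indices_def typeL_indices_def by simp
qed (use finite_generic_forms proper_generic_forms in blast)+

end
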